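(* For almost every realization of the synaptic weights $(J_n)_{n\ge 0}$ and of the Brownian motions, the empirical measure $\hat\mu_n(V_n)$ of the solution $V_n=(V^j)_{j\in I_n}$ of the network equations converges to $\mu_*$ as $N\to\infty$, in the weak topology on $\mathcal{P}_S(\mathcal{T}^{\mathbb{Z}})$.
   Context: Fix $\sigma>0$, $T>0$ and a function $f:\mathbb{R}\to[0,1]$ which is Lipschitz continuous with Lipschitz constant $1$. Let $\mathcal{T}=C([0,T],\mathbb{R})$. For $n\ge 0$ let $I_n=\{-n,\dots,n\}$ and $N=2n+1$; for an integer $k$, "$k \bmod I_n$" is the unique element of $I_n$ congruent to $k$ modulo $N$. Let $R_{\mathcal J}:\mathbb{Z}\times\mathbb{Z}\to\mathbb{R}$ satisfy $|R_{\mathcal J}(k,l)|\le a_kb_l$ for positive sequences with $|k|^3a_k\to0$ as $|k|\to\infty$ and $\sum_l b_l<\infty$; assume $R_{\mathcal J}$ is the autocorrelation of a centered stationary Gaussian field $(J^{ij})_{i,j\in\mathbb{Z}}$ whose spectral density $\sum_{k,l}R_{\mathcal J}(k,l)e^{-ik\varphi_1}e^{-il\varphi_2}$ is strictly positive on $[-\pi,\pi)^2$. Under a probability $\gamma$, for each $n$ the weights $J_n=(J_n^{ij})_{i,j\in I_n}$ are centered jointly Gaussian with $\mathbb{E}^\gamma[J_n^{ij}J_n^{kl}]=\frac1N R_{\mathcal J}((k-i)\bmod I_n,(l-j)\bmod I_n)$. Given $J_n$, $V_n$ solves $dV^i_t=\sum_{j\in I_n}J_n^{ij}f(V^j_t)\,dt+\sigma\,dB^i_t$,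 $V^i_0=0$, $i\in I_n$, with $(B^i)$ independent standard Brownian motions independent of the weights; $P^N(J_n)$ is the law of $V_n$ on $\mathcal{T}^N$, and $Q^n=\mathbb{E}^\gamma[P^N(J_n)]$ is the annealed law. Shifts: $(S^iu)^j=u^{i+j}$ on $\mathcal{T}^{\mathbb{Z}}$; $\mathcal{P}_S(\mathcal{T}^{\mathbb{Z}})$ is the set of shift-invariant Borel probability measures on $\mathcal{T}^{\mathbb{Z}}$. For $u_n\in\mathcal{T}^N$ let $u_{n,p}\in\mathcal{T}^{\mathbb{Z}}$ be its periodic extension $u_{n,p}^j=u_n^{j\bmod I_n}$ and $\hat\mu_n(u_n)=\frac1N\sum_{i\in I_n}\delta_{S^iu_{n,p}}\in\mathcal{P}_S(\mathcal{T}^{\mathbb{Z}})$. Let $\Pi^n=Q^n\circ\hat\mu_n^{-1}$. The sequence $(\Pi^n)$ satisfies a large deviation principle on $\mathcal{P}_S(\mathcal{T}^{\mathbb{Z}})$ (weak topology) with a good rate function $H$ which has a unique zero; $\mu_*$ denotes this unique zero. *)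

theory Defs
  imports "HOL-Probability.Probability"
begin

definition Iset :: "nat \<Rightarrow> int set" where
  "Iset n = {- int n .. int n}"

definition Nn :: "nat \<Rightarrow> nat" where
  "Nn n = 2 * n + 1"

definition modI :: "nat \<Rightarrow> int \<Rightarrow> int" where
  "modI n k = (k + int n) mod int (Nn n) - int n"

text \<open>C([0,T],R) with the sup metric; elements are extensional on [0,T].\<close>
definition pathspace :: "real \<Rightarrow> (real \<Rightarrow> real) metric" where
  "pathspace T = cfunspace (top_of_set {0..T}) euclidean_metric"

definition pathtop :: "real \<Rightarrow> (real \<Rightarrow> real) topology" where
  "pathtop T = mtopology_of (pathspace T)"

definition seqtop :: "real \<Rightarrow> (int \<Rightarrow> real \<Rightarrow> real) topology" where
  "seqtop T = product_topology (\<lambda>_. pathtop T) UNIV"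

definition borel_of :: "'a topology \<Rightarrow> 'a measure" where
  "borel_of X = sigma (topspace X) {U. openin X U}"

definition shift :: "int \<Rightarrow> (int \<Rightarrow> 'a) \<Rightarrow> int \<Rightarrow> 'a" where
  "shift i u = (\<lambda>j. u (i + j))"

definition periodic_ext :: "nat \<Rightarrow> (int \<Rightarrow> 'a) \<Rightarrow> int \<Rightarrow> 'a" where
  "periodic_ext n u = (\<lambda>j. u (modI n j))"

text \<open>Empirical measure (1/N) sum_{i in I_n} delta_{S^i u_{n,p}}, written as the
  image of the uniform probability on I_n.\<close>
definition emp_measure :: "real \<Rightarrow> nat \<Rightarrow> (int \<Rightarrow> real \<Rightarrow> real) \<Rightarrow> (int \<Rightarrow> real \<Rightarrow> real) measure" where
  "emp_measure T n u =
     distr (uniform_measure (count_space UNIV) (Iset n)) (borel_of (seqtop T))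
           (\<lambda>i. shift i (periodic_ext n u))"

definition PS :: "real \<Rightarrow> (int \<Rightarrow> real \<Rightarrow> real) measure set" where
  "PS T = {\<mu>. prob_space \<mu> \<and> sets \<mu> = sets (borel_of (seqtop T)) \<and>
              (\<forall>i. distr \<mu> (borel_of (seqtop T)) (shift i) = \<mu>)}"

definition bcont :: "'a topology \<Rightarrow> ('a \<Rightarrow> real) set" where
  "bcont X = {\<phi>. continuous_map X euclideanreal \<phi> \<and> (\<exists>B. \<forall>x\<in>topspace X. \<bar>\<phi> x\<bar> \<le> B)}"

definition weaktop :: "real \<Rightarrow> (int \<Rightarrow> real \<Rightarrow> real) measure topology" where
  "weaktop T = subtopology
     (topology_generated_by
        {{\<mu>. (\<integral>x. \<phi> x \<partial>\<mu>) \<in> U} | \<phi> U. \<phi> \<in> bcont (seqtop T) \<and> open U})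
     (PS T)"

definition elog :: "real \<Rightarrow> ereal" where
  "elog x = (if x = 0 then - \<infinity> else ereal (ln x))"

definition good_rate_function :: "'a topology \<Rightarrow> ('a \<Rightarrow> ereal) \<Rightarrow> bool" where
  "good_rate_function X H \<longleftrightarrow>
     (\<forall>x\<in>topspace X. 0 \<le> H x) \<and>
     (\<forall>c::real. closedin X {x \<in> topspace X. H x \<le> ereal c} \<and>
                compactin X {x \<in> topspace X. H x \<le> ereal c})"

definition LDP :: "'a topology \<Rightarrow> (nat \<Rightarrow> 'a measure) \<Rightarrow> (nat \<Rightarrow> real) \<Rightarrow> ('a \<Rightarrow> ereal) \<Rightarrow> bool" where
  "LDP X P a H \<longleftrightarrow>
     (\<forall>U. openin X U \<longrightarrow>
        - (INF x\<in>U. H x) \<le> liminf (\<lambda>n. ereal (1 / a n) * elog (measure (P n) U))) \<and>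
     (\<forall>F. closedin X F \<longrightarrow>
        limsup (\<lambda>n. ereal (1 / a n) * elog (measure (P n) F)) \<le> - (INF x\<in>F. H x))"

definition real_gaussian :: "'w measure \<Rightarrow> ('w \<Rightarrow> real) \<Rightarrow> bool" where
  "real_gaussian M Y \<longleftrightarrow> Y \<in> borel_measurable M \<and>
     (\<exists>m s. (0 < s \<and> distributed M lborel Y (normal_density m s)) \<or> (AE \<omega> in M. Y \<omega> = m))"

definition jointly_gaussian :: "'w measure \<Rightarrow> ('i \<Rightarrow> 'w \<Rightarrow> real) \<Rightarrow> 'i set \<Rightarrow> bool" where
  "jointly_gaussian M X I \<longleftrightarrow>
     (\<forall>F c. finite F \<longrightarrow> F \<subseteq> I \<longrightarrow> real_gaussian M (\<lambda>\<omega>. \<Sum>i\<in>F. c i * X i \<omega>))"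

definition std_brownian :: "'w measure \<Rightarrow> real \<Rightarrow> ('w \<Rightarrow> real \<Rightarrow> real) \<Rightarrow> bool" where
  "std_brownian M T W \<longleftrightarrow>
     (\<forall>t\<in>{0..T}. (\<lambda>\<omega>. W \<omega> t) \<in> borel_measurable M) \<and>
     (\<forall>\<omega>\<in>space M. W \<omega> 0 = 0 \<and> continuous_on {0..T} (W \<omega>)) \<and>
     (\<forall>s t. 0 \<le> s \<longrightarrow> s < t \<longrightarrow> t \<le> T \<longrightarrow>
        distributed M lborel (\<lambda>\<omega>. W \<omega> t - W \<omega> s) (normal_density 0 (sqrt (t - s)))) \<and>
     (\<forall>ts :: real list. sorted_wrt (<) ts \<longrightarrow> set ts \<subseteq> {0..T} \<longrightarrow>
        prob_space.indep_vars M (\<lambda>_. borel)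
          (\<lambda>k \<omega>. W \<omega> (ts ! Suc k) - W \<omega> (ts ! k)) {..<length ts - 1})"

definition indep_noise :: "'w measure \<Rightarrow> real \<Rightarrow> int set \<Rightarrow> ('w \<Rightarrow> int \<times> int \<Rightarrow> real)
     \<Rightarrow> ('w \<Rightarrow> int \<Rightarrow> real \<Rightarrow> real) \<Rightarrow> bool" where
  "indep_noise M T I J B \<longleftrightarrow>
     (\<lambda>\<omega>. restrict (J \<omega>) (I \<times> I)) \<in> measurable M (Pi\<^sub>M (I \<times> I) (\<lambda>_. borel)) \<and>
     (\<lambda>\<omega>. \<lambda>i\<in>I. restrict (B \<omega> i) {0..T}) \<in> measurable M (Pi\<^sub>M I (\<lambda>_. Pi\<^sub>M {0..T} (\<lambda>_. borel))) \<and>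
     prob_space.indep_set M
       {(\<lambda>\<omega>. restrict (J \<omega>) (I \<times> I)) -` A \<inter> space M | A. A \<in> sets (Pi\<^sub>M (I \<times> I) (\<lambda>_. borel))}
       {(\<lambda>\<omega>. \<lambda>i\<in>I. restrict (B \<omega> i) {0..T}) -` A \<inter> space M
          | A. A \<in> sets (Pi\<^sub>M I (\<lambda>_. Pi\<^sub>M {0..T} (\<lambda>_. borel)))} \<and>
     prob_space.indep_vars M (\<lambda>_. Pi\<^sub>M {0..T} (\<lambda>_. borel)) (\<lambda>i \<omega>. restrict (B \<omega> i) {0..T}) I"

text \<open>R is the autocorrelation of a centered stationary Gaussian field on Z^2
  (realised, w.l.o.g., as the coordinate field on some probability space).\<close>
definition gaussian_field_autocorrelation :: "(int \<Rightarrow> int \<Rightarrow> real) \<Rightarrow> bool" where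
  "gaussian_field_autocorrelation R \<longleftrightarrow>
     (\<exists>P :: (int \<times> int \<Rightarrow> real) measure. prob_space P \<and>
        jointly_gaussian P (\<lambda>ij \<omega>. \<omega> ij) UNIV \<and>
        (\<forall>i j. (\<integral>\<omega>. \<omega> (i, j) \<partial>P) = 0) \<and>
        (\<forall>i j k l. (\<integral>\<omega>. \<omega> (i, j) * \<omega> (k, l) \<partial>P) = R (k - i) (l - j)))"

definition spectral_density :: "(int \<Rightarrow> int \<Rightarrow> real) \<Rightarrow> real \<Rightarrow> real \<Rightarrow> complex" where
  "spectral_density R \<phi>1 \<phi>2 =
     (\<Sum>\<^sub>\<infinity>(k, l)\<in>UNIV. complex_of_real (R k l) * exp (- \<i> * of_int k * of_real \<phi>1)
                                             * exp (- \<i> * of_int l * of_real \<phi>2))"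

end

theory Submission
  imports Defs
begin

text \<open>Because the rate function H is good and vanishes only at \<open>\<mu>\<^sub>*\<close>, it is bounded below by
  some \<open>c > 0\<close> on every closed set F avoiding \<open>\<mu>\<^sub>*\<close>. The LDP upper bound then makes
  \<open>P(\<mu>\<^sub>n \<in> F)\<close> decay like \<open>exp(-cN/2)\<close>, so by Borel--Cantelli the empirical measure
  almost surely leaves F eventually. The weak topology is generated by uncountably many test
  functions, but convergence is already determined by a countable class: finite maxima of rational
  multiples of products of tent functions centred at polynomial paths with rational coefficients.
  Every nonnegative bounded continuous function is an increasing limit of members of the class,
  which yields the lower half of a portmanteau argument, and the countably many closed sets
  \<open>{\<nu>. |\<integral>\<psi> d\<nu> - \<integral>\<psi> d\<mu>\<^sub>*| \<ge> 1/(k+1)}\<close> with \<open>\<psi>\<close> in the class are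
  handled simultaneously.\<close>

lemma space_borel_of [simp]: "space (borel_of X) = topspace X"
  unfolding borel_of_def by (rule space_measure_of) (auto dest: openin_subset)

lemma sets_borel_of: "sets (borel_of X) = sigma_sets (topspace X) {U. openin X U}"
  unfolding borel_of_def by (rule sets_measure_of) (auto dest: openin_subset)

lemma openin_in_borel_of: "openin X U \<Longrightarrow> U \<in> sets (borel_of X)"
  unfolding sets_borel_of by auto

lemma closedin_in_borel_of:
  assumes "closedin X F"
  shows "F \<in> sets (borel_of X)"
proof -
  have "F = topspace X - (topspace X - F)" "openin X (topspace X - F)"
    using assms by (auto simp: closedin_def)
  then show ?thesis
    by (metis openin_in_borel_of space_borel_of sets.compl_sets)
qed

lemma borel_of_euclidean: "borel_of (euclidean :: 'a::topological_space topology) = borel"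
  unfolding borel_of_def borel_def by simp

lemma measurable_borel_of_continuous_map:
  assumes "continuous_map X Y f"
  shows "f \<in> measurable (borel_of X) (borel_of Y)"
proof -
  have "f \<in> measurable (borel_of X) (sigma (topspace Y) {U. openin Y U})"
  proof (rule measurable_measure_of)
    show "f \<in> space (borel_of X) \<rightarrow> topspace Y"
      using assms by (auto simp: continuous_map_def)
    show "{U. openin Y U} \<subseteq> Pow (topspace Y)"
      by (auto dest: openin_subset)
    fix U assume "U \<in> {U. openin Y U}"
    then have "openin X {x \<in> topspace X. f x \<in> U}"
      using assms by (simp add: continuous_map_def)
    moreover have "f -` U \<inter> space (borel_of X) = {x \<in> topspace X. f x \<in> U}"
      by auto
    ultimately show "f -` U \<inter> space (borel_of X) \<in> sets (borel_of X)"
      by (simp add: openin_in_borel_of)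
  qed
  then show ?thesis
    unfolding borel_of_def[of Y] .
qed

lemma bcontI:
  assumes "continuous_map X euclideanreal \<phi>" "\<And>x. x \<in> topspace X \<Longrightarrow> \<bar>\<phi> x\<bar> \<le> B"
  shows "\<phi> \<in> bcont X"
  using assms unfolding bcont_def by blast

lemma bcont_continuous: "\<phi> \<in> bcont X \<Longrightarrow> continuous_map X euclideanreal \<phi>"
  by (simp add: bcont_def)

lemma bcont_bounded: "\<phi> \<in> bcont X \<Longrightarrow> \<exists>B. \<forall>x\<in>topspace X. \<bar>\<phi> x\<bar> \<le> B"
  by (simp add: bcont_def)

lemma borel_measurable_bcont:
  assumes "sets \<nu> = sets (borel_of X)" "\<phi> \<in> bcont X"
  shows "\<phi> \<in> borel_measurable \<nu>"
proof -
  have "\<phi> \<in> borel_measurable (borel_of X)"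
    using measurable_borel_of_continuous_map[OF bcont_continuous[OF assms(2)]]
    by (simp add: borel_of_euclidean)
  then show ?thesis
    using measurable_cong_sets[OF assms(1) refl] by blast
qed

lemma integrable_bcont:
  assumes "finite_measure \<nu>" "sets \<nu> = sets (borel_of X)" "\<phi> \<in> bcont X"
  shows "integrable \<nu> \<phi>"
proof -
  obtain B where B: "\<forall>x\<in>topspace X. \<bar>\<phi> x\<bar> \<le> B"
    using bcont_bounded[OF assms(3)] by blast
  have "space \<nu> = topspace X"
    using sets_eq_imp_space_eq[OF assms(2)] by simp
  then have "AE x in \<nu>. norm (\<phi> x) \<le> B"
    using B by (intro AE_I2) simp
  then show ?thesis
    by (rule finite_measure.integrable_const_bound[OF assms(1)])
       (rule borel_measurable_bcont[OF assms(2,3)])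
qed

section \<open>Large deviations and almost sure convergence\<close>

lemma compactin_Inter_antimono_nonempty:
  fixes C :: "nat \<Rightarrow> 'a set"
  assumes K: "compactin X K" and C: "\<And>m. closedin X (C m)" "\<And>m k. m \<le> k \<Longrightarrow> C k \<subseteq> C m"
    and meets: "\<And>m. K \<inter> C m \<noteq> {}"
  shows "K \<inter> \<Inter> (range C) \<noteq> {}"
proof (rule compactin_fip[THEN iffD1, OF K, THEN conjunct2, rule_format], intro conjI allI impI)
  show "\<forall>D\<in>range C. closedin X D"
    using C(1) by blast
  fix \<F> assume "finite \<F> \<and> \<F> \<subseteq> range C"
  then obtain Ms where Ms: "finite Ms" "\<F> = C ` Ms"
    by (meson finite_subset_image)
  define k where "k = Max (insert 0 Ms)"
  have "m \<le> k" if "m \<in> Ms" for m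
    using Ms(1) that unfolding k_def by simp
  then have "K \<inter> C k \<subseteq> K \<inter> \<Inter> \<F>"
    using C(2) unfolding Ms(2) by blast
  then show "K \<inter> \<Inter> \<F> \<noteq> {}"
    using meets[of k] by blast
qed

lemma good_rate_function_bounded_below_on_closed:
  assumes good: "good_rate_function X H"
    and zero: "x0 \<in> topspace X" "H x0 = 0"
    and unique: "\<forall>x\<in>topspace X. H x = 0 \<longrightarrow> x = x0"
    and F: "closedin X F" "x0 \<notin> F"
  shows "\<exists>c>0. \<forall>x\<in>F. ereal c \<le> H x"
proof (rule ccontr)
  define L where "L m = {x \<in> topspace X. H x \<le> ereal (1 / Suc m)}" for m :: nat
  have F_sub: "F \<subseteq> topspace X"
    using F(1) closedin_subset by blast
  assume "\<not> ?thesis"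
  then have small: "\<exists>x\<in>F. H x < ereal c" if "c > 0" for c
    using that by (meson not_le)
  have L_closed: "closedin X (L m)" and L_compact: "compactin X (L m)" for m
    using good unfolding good_rate_function_def L_def by blast+
  have L_antimono: "L k \<subseteq> L m" if "m \<le> k" for m k
  proof -
    have "ereal (1 / Suc k) \<le> ereal (1 / Suc m)"
      using that by (simp add: frac_le)
    then show ?thesis
      unfolding L_def by (auto intro: order.trans)
  qed
  have meets: "L 0 \<inter> (F \<inter> L m) \<noteq> {}" for m
  proof -
    obtain x where x: "x \<in> F" "H x < ereal (1 / Suc m)"
      using small[of "1 / Suc m"] by auto
    then have "x \<in> L m"
      using F_sub unfolding L_def by auto
    then show ?thesis
      using x(1) L_antimono[of 0 m] by blast
  qed
  have "L 0 \<inter> \<Inter> (range (\<lambda>m. F \<inter> L m)) \<noteq> {}"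
  proof (rule compactin_Inter_antimono_nonempty[OF L_compact])
    show "closedin X (F \<inter> L m)" for m
      using F(1) L_closed by (rule closedin_Int)
    show "F \<inter> L k \<subseteq> F \<inter> L m" if "m \<le> k" for m k
      using L_antimono[OF that] by blast
  qed (rule meets)
  then obtain x where x: "x \<in> F" "\<And>m. x \<in> L m"
    by blast
  have "H x \<le> 0"
  proof (rule ereal_le_epsilon2, simp)
    fix e :: real assume "0 < e"
    then obtain m where "inverse (real (Suc m)) < e"
      using reals_Archimedean by blast
    then have "ereal (1 / Suc m) \<le> ereal e"
      by (simp add: divide_inverse)
    moreover have "H x \<le> ereal (1 / Suc m)"
      using x(2)[of m] unfolding L_def by simp
    ultimately show "H x \<le> ereal e"
      by (rule order.trans[rotated])
  qed
  moreover have "0 \<le> H x"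
    using good x F_sub unfolding good_rate_function_def by blast
  ultimately have "x = x0"
    using unique x F_sub by auto
  then show False
    using x F by simp
qed

text \<open>Pitfall: \<^const>\<open>distr\<close> yields the zero measure whenever the preimage map is not a
  measure (for instance when the map is not measurable), so a nonzero value certifies that it
  computes preimage measures.\<close>
lemma emeasure_distr_of_nonzero:
  assumes "emeasure (distr M N f) A \<noteq> 0" "B \<in> sets N"
  shows "emeasure (distr M N f) B = emeasure M (f -` B \<inter> space M)"
proof -
  let ?\<mu> = "\<lambda>A. emeasure M (f -` A \<inter> space M)"
  have eq: "emeasure (distr M N f) = (\<lambda>B. if B \<in> sigma_sets (space N) (sets N) \<and>
       measure_space (space N) (sigma_sets (space N) (sets N)) ?\<mu> then ?\<mu> B else 0)"
    unfolding distr_def by (rule emeasure_measure_of_conv)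
  have "measure_space (space N) (sigma_sets (space N) (sets N)) ?\<mu>"
    using assms(1) unfolding eq by (auto split: if_splits)
  then show ?thesis
    using assms(2) unfolding eq by (simp add: sets.sigma_sets_eq)
qed

lemma vimage_in_sets_of_distr_nonzero:
  assumes M: "prob_space M" and f: "f \<in> space M \<rightarrow> space N"
    and nonzero: "emeasure (distr M N f) (space N) \<noteq> 0" and A: "A \<in> sets N"
  shows "f -` A \<inter> space M \<in> sets M"
proof (rule ccontr)
  interpret prob_space M by fact
  let ?\<mu> = "\<lambda>A. emeasure M (f -` A \<inter> space M)"
  have \<mu>_eq: "emeasure (distr M N f) B = ?\<mu> B" if "B \<in> sets N" for B
    using emeasure_distr_of_nonzero[OF nonzero that] .
  have "emeasure (distr M N f) A + emeasure (distr M N f) (space N - A)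
      = emeasure (distr M N f) (space N)"
    using A by (subst plus_emeasure) (auto simp: Un_absorb1 dest: sets.sets_into_space)
  moreover have "f -` space N \<inter> space M = space M"
    using f by auto
  ultimately have sum1: "?\<mu> A + ?\<mu> (space N - A) = 1"
    using A by (simp add: \<mu>_eq emeasure_space_1)
  assume "f -` A \<inter> space M \<notin> sets M"
  then have "?\<mu> (space N - A) = 1"
    using sum1 by (simp add: emeasure_notin_sets)
  then have "f -` (space N - A) \<inter> space M \<in> sets M"
    using emeasure_notin_sets by fastforce
  then have "space M - f -` (space N - A) \<inter> space M \<in> sets M"
    by blast
  moreover have "space M - f -` (space N - A) \<inter> space M = f -` A \<inter> space M"
    using f sets.sets_into_space[OF A] by auto
  ultimately show False
    using \<open>f -` A \<inter> space M \<notin> sets M\<close> by simp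
qed

lemma LDP_eventually_measure_topspace_nonzero:
  assumes LDP: "LDP X P a H" and a: "\<And>n. a n > 0"
    and zero: "x0 \<in> topspace X" "H x0 = 0"
  shows "eventually (\<lambda>n. measure (P n) (topspace X) \<noteq> 0) sequentially"
proof -
  have "0 \<le> - (INF x\<in>topspace X. H x)"
    using INF_lower[OF zero(1), of H] zero(2) by simp
  also have "\<dots> \<le> liminf (\<lambda>n. ereal (1 / a n) * elog (measure (P n) (topspace X)))"
    using LDP unfolding LDP_def by blast
  finally have "eventually (\<lambda>n. ereal (1 / a n) * elog (measure (P n) (topspace X)) > -1) sequentially"
    by (intro less_LiminfD) (simp add: order.strict_trans2[of _ 0])
  then show ?thesis
  proof (rule eventually_mono)
    fix n
    have "ereal (1 / a n) * - \<infinity> = - \<infinity>"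
      using a[of n] by simp
    then show "ereal (1 / a n) * elog (measure (P n) (topspace X)) > -1 \<Longrightarrow>
               measure (P n) (topspace X) \<noteq> 0"
      by (auto simp: elog_def)
  qed
qed

lemma LDP_closed_exponential_bound:
  assumes LDP: "LDP X P a H" and a: "\<And>n. a n > 0"
    and F: "closedin X F" and c: "\<forall>x\<in>F. ereal c \<le> H x" "c' < c"
  shows "eventually (\<lambda>n. measure (P n) F \<le> exp (- a n * c')) sequentially"
proof -
  have "limsup (\<lambda>n. ereal (1 / a n) * elog (measure (P n) F)) \<le> - (INF x\<in>F. H x)"
    using LDP F unfolding LDP_def by blast
  also have "\<dots> \<le> - ereal c"
    using c(1) by (simp add: INF_greatest ereal_minus_le_minus del: uminus_ereal.simps)
  also have "\<dots> < - ereal c'"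
    using c(2) by simp
  finally have "eventually (\<lambda>n. ereal (1 / a n) * elog (measure (P n) F) < - ereal c') sequentially"
    by (rule Limsup_lessD)
  then show ?thesis
  proof (rule eventually_mono)
    fix n assume bound: "ereal (1 / a n) * elog (measure (P n) F) < - ereal c'"
    show "measure (P n) F \<le> exp (- a n * c')"
    proof (cases "measure (P n) F = 0")
      case False
      then have "ln (measure (P n) F) / a n < - c'"
        using bound by (simp add: elog_def)
      then have "ln (measure (P n) F) < - a n * c'"
        using a[of n] by (simp add: field_simps)
      then show ?thesis
        using False by (metis exp_less_mono exp_ln less_eq_real_def measure_nonneg)
    qed simp
  qed
qed

lemma AE_eventually_notin_of_summable:
  assumes M: "prob_space M" and b: "\<And>n. 0 \<le> b n" "summable b"
    and bound: "\<And>n. n \<ge> n0 \<Longrightarrow> Y n -` F \<inter> space M \<in> sets M \<and> measure M (Y n -` F \<inter> space M) \<le> b n"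
  shows "AE \<omega> in M. eventually (\<lambda>n. Y n \<omega> \<notin> F) sequentially"
proof -
  interpret prob_space M by fact
  define A where "A n = (if n \<ge> n0 then Y n -` F \<inter> space M else {})" for n
  have A_sets: "A n \<in> sets M" and A_bound: "measure M (A n) \<le> b n" for n
    using bound[of n] b(1)[of n] unfolding A_def by auto
  have "summable (\<lambda>n. measure M (A n))"
    by (rule summable_comparison_test[OF _ b(2)]) (use A_bound in auto)
  then have "AE \<omega> in M. eventually (\<lambda>n. \<omega> \<in> space M - A n) sequentially"
    by (intro borel_cantelli_AE1 A_sets) (simp_all add: emeasure_eq_measure)
  then show ?thesis
  proof (rule AE_mp[OF _ AE_I2], intro impI)
    fix \<omega> assume "eventually (\<lambda>n. \<omega> \<in> space M - A n) sequentially"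
    then show "eventually (\<lambda>n. Y n \<omega> \<notin> F) sequentially"
      using eventually_ge_at_top[of n0] by eventually_elim (auto simp: A_def)
  qed
qed

text \<open>Measurability of the events is not assumed: it is recovered from the LDP lower bound on
  the whole space, which rules out the degenerate case of \<^const>\<open>distr\<close>.\<close>
lemma LDP_AE_eventually_notin:
  assumes M: "prob_space M"
    and Y: "\<And>n \<omega>. \<omega> \<in> space M \<Longrightarrow> Y n \<omega> \<in> topspace X"
    and LDP: "LDP X (\<lambda>n. distr M (borel_of X) (Y n)) (\<lambda>n. real (Nn n)) H"
    and good: "good_rate_function X H"
    and zero: "x0 \<in> topspace X" "H x0 = 0"
    and unique: "\<forall>x\<in>topspace X. H x = 0 \<longrightarrow> x = x0"
    and F: "closedin X F" "x0 \<notin> F"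
  shows "AE \<omega> in M. eventually (\<lambda>n. Y n \<omega> \<notin> F) sequentially"
proof -
  define P where "P n = distr M (borel_of X) (Y n)" for n
  obtain c where c: "c > 0" "\<forall>x\<in>F. ereal c \<le> H x"
    using good_rate_function_bounded_below_on_closed[OF good zero unique F] by blast
  have Nn_pos: "real (Nn n) > 0" for n
    by (simp add: Nn_def)
  have ev_nonzero: "eventually (\<lambda>n. measure (P n) (topspace X) \<noteq> 0) sequentially"
    unfolding P_def by (rule LDP_eventually_measure_topspace_nonzero[OF LDP Nn_pos zero])
  have ev_bound: "eventually (\<lambda>n. measure (P n) F \<le> exp (- real (Nn n) * (c / 2))) sequentially"
    unfolding P_def by (rule LDP_closed_exponential_bound[OF LDP Nn_pos F(1) c(2)]) (use c(1) in simp)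
  obtain n0 where n0: "\<And>n. n \<ge> n0 \<Longrightarrow> measure (P n) (topspace X) \<noteq> 0 \<and>
                                             measure (P n) F \<le> exp (- real (Nn n) * (c / 2))"
    using eventually_conj[OF ev_nonzero ev_bound] unfolding eventually_sequentially by blast
  show ?thesis
  proof (rule AE_eventually_notin_of_summable[OF M _ _ conjI])
    show "0 \<le> exp (- c) ^ n" for n
      by simp
    show "summable (\<lambda>n. exp (- c) ^ n)"
      using c(1) by (simp add: summable_geometric)
    fix n assume "n \<ge> n0"
    then have nonzero: "emeasure (P n) (space (borel_of X)) \<noteq> 0"
      using n0[OF \<open>n \<ge> n0\<close>] by (auto simp: measure_def)
    show "Y n -` F \<inter> space M \<in> sets M"
      using vimage_in_sets_of_distr_nonzero[OF M _ _ closedin_in_borel_of[OF F(1)]] Y nonzero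
      unfolding P_def by auto
    have "emeasure (P n) F = emeasure M (Y n -` F \<inter> space M)"
      using nonzero unfolding P_def by (rule emeasure_distr_of_nonzero[OF _ closedin_in_borel_of[OF F(1)]])
    then have "measure M (Y n -` F \<inter> space M) = measure (P n) F"
      by (simp add: measure_def)
    also have "\<dots> \<le> exp (- real (Nn n) * (c / 2))"
      using n0 \<open>n \<ge> n0\<close> by blast
    also have "\<dots> \<le> exp (- c) ^ n"
      using c(1) by (simp add: Nn_def exp_of_nat_mult[symmetric] field_simps)
    finally show "measure M (Y n -` F \<inter> space M) \<le> exp (- c) ^ n" .
  qed
qed

lemma topspace_weaktop [simp]: "topspace (weaktop T) = PS T"
proof -
  have "(\<lambda>x. 0::real) \<in> bcont (seqtop T)"
    unfolding bcont_def by auto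
  then have "UNIV \<in> {{\<mu>. (\<integral>x. \<phi> x \<partial>\<mu>) \<in> U} | \<phi> U. \<phi> \<in> bcont (seqtop T) \<and> open U}"
    by (intro CollectI exI[of _ "\<lambda>x. 0::real"] exI[of _ UNIV]) auto
  then show ?thesis
    unfolding weaktop_def by auto
qed

lemma openin_weaktop_integral_vimage:
  assumes "\<phi> \<in> bcont (seqtop T)" "open U"
  shows "openin (weaktop T) (PS T \<inter> {\<nu>. (\<integral>x. \<phi> x \<partial>\<nu>) \<in> U})"
proof -
  let ?S = "{{\<mu>. (\<integral>x. \<phi> x \<partial>\<mu>) \<in> U} | \<phi> U. \<phi> \<in> bcont (seqtop T) \<and> open U}"
  have "openin (topology_generated_by ?S) {\<nu>. (\<integral>x. \<phi> x \<partial>\<nu>) \<in> U}"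
    using assms by (intro topology_generated_by_Basis) blast
  then show ?thesis
    unfolding weaktop_def openin_subtopology by (auto simp: Int_commute)
qed

lemma limitin_weaktopI:
  assumes \<mu>: "\<mu> \<in> PS T" and \<nu>: "\<And>n. \<nu> n \<in> PS T"
    and conv: "\<And>\<phi>. \<phi> \<in> bcont (seqtop T) \<Longrightarrow> (\<lambda>n. \<integral>x. \<phi> x \<partial>\<nu> n) \<longlonglongrightarrow> (\<integral>x. \<phi> x \<partial>\<mu>)"
  shows "limitin (weaktop T) \<nu> \<mu> sequentially"
proof -
  let ?S = "{{\<mu>. (\<integral>x. \<phi> x \<partial>\<mu>) \<in> U} | \<phi> U. \<phi> \<in> bcont (seqtop T) \<and> open U}"
  have generated: "eventually (\<lambda>n. \<nu> n \<in> V) sequentially"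
    if "generate_topology_on ?S V" "\<mu> \<in> V" for V
    using that
  proof (induction rule: generate_topology_on.induct)
    case (Int a b)
    then show ?case by (auto intro: eventually_conj)
  next
    case (UN K)
    then obtain k where "k \<in> K" "\<mu> \<in> k" by auto
    then have "eventually (\<lambda>n. \<nu> n \<in> k) sequentially"
      using UN by blast
    then show ?case
      by (rule eventually_mono) (use \<open>k \<in> K\<close> in auto)
  next
    case (Basis s)
    then obtain \<phi> U where s: "s = {\<mu>. (\<integral>x. \<phi> x \<partial>\<mu>) \<in> U}" "\<phi> \<in> bcont (seqtop T)" "open U"
      by blast
    then show ?case
      using Basis topological_tendstoD[OF conv[OF s(2)] s(3)] by simp
  qed simp
  show ?thesis
    unfolding limitin_def
  proof (intro conjI allI impI)
    show "\<mu> \<in> topspace (weaktop T)"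
      using \<mu> by simp
    fix W assume W: "openin (weaktop T) W \<and> \<mu> \<in> W"
    then obtain V where V: "openin (topology_generated_by ?S) V" "W = PS T \<inter> V"
      unfolding weaktop_def openin_subtopology by (auto simp: Int_commute)
    then have "generate_topology_on ?S V"
      by (simp add: openin_topology_generated_by_iff)
    then have "eventually (\<lambda>n. \<nu> n \<in> V) sequentially"
      using generated W V(2) by blast
    then show "eventually (\<lambda>n. \<nu> n \<in> W) sequentially"
      using \<nu> V(2) by (auto elim: eventually_mono)
  qed
qed

section \<open>Empirical measures are shift invariant\<close>

lemma finite_Iset [simp]: "finite (Iset n)"
  unfolding Iset_def by simp

lemma card_Iset: "card (Iset n) = Nn n"
  unfolding Iset_def Nn_def by simp

lemma modI_in_Iset: "modI n k \<in> Iset n"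
proof -
  have N: "int (Nn n) = 2 * int n + 1"
    by (simp add: Nn_def)
  have "0 \<le> (k + int n) mod int (Nn n)" "(k + int n) mod int (Nn n) < int (Nn n)"
    unfolding N by (rule pos_mod_sign, simp, rule pos_mod_bound, simp)
  then have "- int n \<le> modI n k \<and> modI n k \<le> int n"
    unfolding modI_def using N by linarith
  then show ?thesis
    by (simp add: Iset_def)
qed

lemma modI_modI_add: "modI n (modI n a + b) = modI n (a + b)"
proof -
  have "(modI n a + b + int n) mod int (Nn n) = ((a + int n) mod int (Nn n) + b) mod int (Nn n)"
    unfolding modI_def by (simp add: algebra_simps)
  also have "\<dots> = (a + int n + b) mod int (Nn n)"
    by (simp add: mod_add_left_eq)
  finally show ?thesis
    unfolding modI_def by (simp add: algebra_simps)
qed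

lemma modI_Iset: "i \<in> Iset n \<Longrightarrow> modI n i = i"
  unfolding modI_def Iset_def Nn_def by auto

lemma bij_betw_modI_rotation: "bij_betw (\<lambda>i. modI n (k + i)) (Iset n) (Iset n)"
proof (rule bij_betwI[where g = "\<lambda>i. modI n (i - k)"])
  show "(\<lambda>i. modI n (k + i)) \<in> Iset n \<rightarrow> Iset n" "(\<lambda>i. modI n (i - k)) \<in> Iset n \<rightarrow> Iset n"
    by (simp_all add: modI_in_Iset)
  show "modI n (modI n (k + i) - k) = i" if "i \<in> Iset n" for i
    using modI_modI_add[of n "k + i" "- k"] that by (simp add: modI_Iset)
  show "modI n (k + modI n (i - k)) = i" if "i \<in> Iset n" for i
    using modI_modI_add[of n "i - k" k] that by (simp add: modI_Iset add.commute)
qed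

lemma distr_uniform_Iset_rotation:
  fixes n :: nat and k :: int
  defines "U \<equiv> uniform_measure (count_space UNIV) (Iset n)"
  shows "distr U (count_space UNIV) (\<lambda>i. modI n (k + i)) = U"
  unfolding U_def
proof (rule uniform_distrI)
  let ?\<pi> = "\<lambda>i. modI n (k + i)"
  have "Iset n \<noteq> {}"
    using modI_in_Iset by blast
  then show "emeasure (count_space UNIV) (Iset n) \<noteq> 0"
    by simp
  fix B :: "int set"
  have bij: "bij_betw ?\<pi> (Iset n) (Iset n)"
    by (rule bij_betw_modI_rotation)
  have "bij_betw ?\<pi> (Iset n \<inter> ?\<pi> -` B) (Iset n \<inter> B)"
  proof (rule bij_betw_subset[OF bij])
    have "?\<pi> ` (Iset n \<inter> ?\<pi> -` B) = ?\<pi> ` Iset n \<inter> B"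
      by blast
    then show "?\<pi> ` (Iset n \<inter> ?\<pi> -` B) = Iset n \<inter> B"
      using bij_betw_imp_surj_on[OF bij] by simp
  qed auto
  then have "card (Iset n \<inter> ?\<pi> -` B) = card (Iset n \<inter> B)"
    by (rule bij_betw_same_card)
  then show "emeasure (uniform_measure (count_space UNIV) (Iset n)) (?\<pi> -` B \<inter> space (uniform_measure (count_space UNIV) (Iset n)))
      = emeasure (count_space UNIV) (Iset n \<inter> B) / emeasure (count_space UNIV) (Iset n)"
    by (simp add: emeasure_uniform_measure Int_commute)
qed simp_all

lemma continuous_map_shift: "continuous_map (seqtop T) (seqtop T) (shift k)"
  unfolding seqtop_def shift_def continuous_map_componentwise_UNIV
  by (auto intro: continuous_map_product_projection)

lemma shift_shift_periodic_ext:
  "shift k (shift i (periodic_ext n u)) = shift (modI n (k + i)) (periodic_ext n u)"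
proof
  fix j
  have "modI n (i + (k + j)) = modI n (modI n (k + i) + j)"
    by (simp add: modI_modI_add add.assoc add.left_commute)
  then show "shift k (shift i (periodic_ext n u)) j = shift (modI n (k + i)) (periodic_ext n u) j"
    by (simp add: shift_def periodic_ext_def)
qed

lemma emp_measure_in_PS:
  assumes u: "\<And>j. j \<in> Iset n \<Longrightarrow> u j \<in> topspace (pathtop T)"
  shows "emp_measure T n u \<in> PS T"
proof -
  define U where "U = uniform_measure (count_space UNIV) (Iset n)"
  define g where "g i = shift i (periodic_ext n u)" for i
  let ?B = "borel_of (seqtop T)"
  have emp: "emp_measure T n u = distr U ?B g"
    unfolding emp_measure_def U_def g_def by simp
  have sets_U: "sets U = sets (count_space UNIV)"
    unfolding U_def by simp
  have g_meas_count: "g \<in> measurable (count_space UNIV) ?B"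
    using u modI_in_Iset by (auto simp: seqtop_def g_def shift_def periodic_ext_def)
  then have g_meas: "g \<in> measurable U ?B"
    by (simp add: measurable_cong_sets[OF sets_U refl])
  have "prob_space U"
    unfolding U_def
    by (intro prob_space_uniform_measure) (simp_all add: card_Iset Nn_def del: of_nat_Suc)
  then have "prob_space (emp_measure T n u)"
    unfolding emp by (rule prob_space.prob_space_distr[OF _ g_meas])
  moreover have "distr (emp_measure T n u) ?B (shift k) = emp_measure T n u" for k
  proof -
    let ?\<pi> = "\<lambda>i. modI n (k + i)"
    have shift_g: "shift k \<circ> g = g \<circ> ?\<pi>"
      by (rule ext) (simp add: g_def shift_shift_periodic_ext)
    have "distr (emp_measure T n u) ?B (shift k) = distr U ?B (g \<circ> ?\<pi>)"
      unfolding emp shift_g[symmetric]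
      by (rule distr_distr[OF measurable_borel_of_continuous_map[OF continuous_map_shift] g_meas])
    also have "\<dots> = distr (distr U (count_space UNIV) ?\<pi>) ?B g"
      by (rule distr_distr[OF g_meas_count, symmetric]) (simp add: measurable_cong_sets[OF sets_U refl])
    also have "\<dots> = emp_measure T n u"
      unfolding U_def distr_uniform_Iset_rotation emp[unfolded U_def] ..
    finally show ?thesis .
  qed
  ultimately show ?thesis
    unfolding PS_def by (simp add: emp_measure_def)
qed

section \<open>Countable classes determining weak convergence\<close>

definition lower_approximating_class :: "'a topology \<Rightarrow> ('a \<Rightarrow> real) set \<Rightarrow> bool" where
  "lower_approximating_class X D \<longleftrightarrow>
     D \<subseteq> bcont X \<and> (\<forall>\<psi>\<in>D. \<forall>x\<in>topspace X. 0 \<le> \<psi> x) \<and> (\<lambda>x. 0) \<in> D \<and>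
     (\<forall>\<psi>1\<in>D. \<forall>\<psi>2\<in>D. (\<lambda>x. max (\<psi>1 x) (\<psi>2 x)) \<in> D) \<and>
     (\<forall>\<phi> x q. \<phi> \<in> bcont X \<longrightarrow> (\<forall>y\<in>topspace X. 0 \<le> \<phi> y) \<longrightarrow> x \<in> topspace X \<longrightarrow>
        0 < q \<longrightarrow> q < \<phi> x \<longrightarrow> (\<exists>\<psi>\<in>D. (\<forall>y\<in>topspace X. \<psi> y \<le> \<phi> y) \<and> q \<le> \<psi> x))"

lemma lower_approximating_classI:
  assumes "D \<subseteq> bcont X" "\<And>\<psi> x. \<psi> \<in> D \<Longrightarrow> x \<in> topspace X \<Longrightarrow> 0 \<le> \<psi> x" "(\<lambda>x. 0) \<in> D"
    "\<And>\<psi>1 \<psi>2. \<psi>1 \<in> D \<Longrightarrow> \<psi>2 \<in> D \<Longrightarrow> (\<lambda>x. max (\<psi>1 x) (\<psi>2 x)) \<in> D"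
    "\<And>\<phi> x q. \<phi> \<in> bcont X \<Longrightarrow> \<forall>y\<in>topspace X. 0 \<le> \<phi> y \<Longrightarrow> x \<in> topspace X \<Longrightarrow>
        0 < q \<Longrightarrow> q < \<phi> x \<Longrightarrow> \<exists>\<psi>\<in>D. (\<forall>y\<in>topspace X. \<psi> y \<le> \<phi> y) \<and> q \<le> \<psi> x"
  shows "lower_approximating_class X D"
  using assms unfolding lower_approximating_class_def by blast

lemma lower_approximating_classD:
  assumes "lower_approximating_class X D"
  shows "D \<subseteq> bcont X" "\<And>\<psi> x. \<psi> \<in> D \<Longrightarrow> x \<in> topspace X \<Longrightarrow> 0 \<le> \<psi> x" "(\<lambda>x. 0) \<in> D"
    "\<And>\<psi>1 \<psi>2. \<psi>1 \<in> D \<Longrightarrow> \<psi>2 \<in> D \<Longrightarrow> (\<lambda>x. max (\<psi>1 x) (\<psi>2 x)) \<in> D"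
    "\<And>\<phi> x q. \<phi> \<in> bcont X \<Longrightarrow> \<forall>y\<in>topspace X. 0 \<le> \<phi> y \<Longrightarrow> x \<in> topspace X \<Longrightarrow>
        0 < q \<Longrightarrow> q < \<phi> x \<Longrightarrow> \<exists>\<psi>\<in>D. (\<forall>y\<in>topspace X. \<psi> y \<le> \<phi> y) \<and> q \<le> \<psi> x"
  using assms unfolding lower_approximating_class_def by blast+

lemma bcont_affine:
  assumes "\<phi> \<in> bcont X"
  shows "(\<lambda>x. a * \<phi> x + b) \<in> bcont X"
proof -
  obtain B where B: "\<forall>x\<in>topspace X. \<bar>\<phi> x\<bar> \<le> B"
    using bcont_bounded[OF assms] by blast
  show ?thesis
  proof (rule bcontI)
    show "continuous_map X euclideanreal (\<lambda>x. a * \<phi> x + b)"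
      using bcont_continuous[OF assms] by (intro continuous_intros)
    fix x assume "x \<in> topspace X"
    have "\<bar>a * \<phi> x + b\<bar> \<le> \<bar>a\<bar> * \<bar>\<phi> x\<bar> + \<bar>b\<bar>"
      by (metis abs_mult abs_triangle_ineq)
    also have "\<dots> \<le> \<bar>a\<bar> * B + \<bar>b\<bar>"
      using B \<open>x \<in> topspace X\<close> by (simp add: mult_left_mono)
    finally show "\<bar>a * \<phi> x + b\<bar> \<le> \<bar>a\<bar> * B + \<bar>b\<bar>" .
  qed
qed

lemma LIMSEQ_from_below:
  fixes f :: "nat \<Rightarrow> real"
  assumes le: "\<And>k. f k \<le> l" and ge: "\<And>q. q < l \<Longrightarrow> eventually (\<lambda>k. q \<le> f k) sequentially"
  shows "f \<longlonglongrightarrow> l"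
proof (rule LIMSEQ_I)
  fix r :: real assume "r > 0"
  then obtain k0 where k0: "\<And>k. k \<ge> k0 \<Longrightarrow> l - r / 2 \<le> f k"
    using ge[of "l - r / 2"] unfolding eventually_sequentially by auto
  have "norm (f k - l) < r" if "k \<ge> k0" for k
    using k0[OF that] le[of k] \<open>r > 0\<close> unfolding real_norm_def abs_less_iff by linarith
  then show "\<exists>k0. \<forall>k\<ge>k0. norm (f k - l) < r"
    by blast
qed

lemma lower_approximating_class_increasing_approx:
  assumes D: "lower_approximating_class X D" "countable D"
    and \<phi>: "\<phi> \<in> bcont X" "\<forall>y\<in>topspace X. 0 \<le> \<phi> y"
  obtains s where "\<And>k. s k \<in> D" "\<And>k x. x \<in> topspace X \<Longrightarrow> s k x \<le> \<phi> x"
    "\<And>x. x \<in> topspace X \<Longrightarrow> (\<lambda>k. s k x) \<longlonglongrightarrow> \<phi> x"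
proof -
  define D' where "D' = {\<psi>\<in>D. \<forall>y\<in>topspace X. \<psi> y \<le> \<phi> y}"
  have "D' \<noteq> {}"
    using lower_approximating_classD(3)[OF D(1)] \<phi>(2) unfolding D'_def by auto
  moreover have "countable D'"
    using D(2) unfolding D'_def by simp
  ultimately have e: "range (from_nat_into D') = D'"
    by (rule range_from_nat_into)
  define e where "e = from_nat_into D'"
  define s where "s k x = (MAX i\<in>{..k}. e i x)" for k x
  have s_Suc: "s (Suc k) = (\<lambda>x. max (s k x) (e (Suc k) x))" for k
    unfolding s_def by (auto simp: atMost_Suc max.commute)
  have e_D: "e i \<in> D" and e_le: "x \<in> topspace X \<Longrightarrow> e i x \<le> \<phi> x" for i x
    using e unfolding e_def D'_def by blast+
  have s_D: "s k \<in> D" for k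
  proof (induction k)
    case 0
    have "s 0 = e 0"
      unfolding s_def by auto
    then show ?case
      using e_D by simp
  next
    case (Suc k)
    moreover have "e (Suc k) \<in> D"
      by (rule e_D)
    ultimately show ?case
      unfolding s_Suc by (rule lower_approximating_classD(4)[OF D(1)])
  qed
  have s_le: "s k x \<le> \<phi> x" if "x \<in> topspace X" for k x
    using e_le that unfolding s_def by (simp add: Max_le_iff)
  have e_le_s: "e i x \<le> s k x" if "i \<le> k" for i k x
    unfolding s_def by (rule Max_ge) (use that in auto)
  have "(\<lambda>k. s k x) \<longlonglongrightarrow> \<phi> x" if x: "x \<in> topspace X" for x
  proof (rule LIMSEQ_from_below)
    show "s k x \<le> \<phi> x" for k
      by (rule s_le[OF x])
    fix q assume "q < \<phi> x"
    show "eventually (\<lambda>k. q \<le> s k x) sequentially"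
    proof (cases "q > 0")
      case True
      then obtain \<psi> where \<psi>: "\<psi> \<in> D'" "q \<le> \<psi> x"
        using lower_approximating_classD(5)[OF D(1) \<phi> x True \<open>q < \<phi> x\<close>] unfolding D'_def by blast
      then obtain i where "e i = \<psi>"
        using e unfolding e_def by (metis rangeE)
      then have "q \<le> s k x" if "i \<le> k" for k
        using e_le_s[OF that, of x] \<psi>(2) by simp
      then show ?thesis
        by (rule eventually_sequentiallyI)
    next
      case False
      then have "q \<le> s k x" for k
        using lower_approximating_classD(2)[OF D(1) s_D x, of k] by linarith
      then show ?thesis
        by (simp add: always_eventually)
    qed
  qed
  then show ?thesis
    using that s_D s_le by blast
qed

lemma tendsto_integral_bcont:
  assumes \<mu>: "finite_measure \<mu>" "sets \<mu> = sets (borel_of X)"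
    and s: "\<And>k. s k \<in> bcont X" and \<phi>: "\<phi> \<in> bcont X"
    and B: "\<And>k x. x \<in> topspace X \<Longrightarrow> \<bar>s k x\<bar> \<le> B"
    and lim: "\<And>x. x \<in> topspace X \<Longrightarrow> (\<lambda>k. s k x) \<longlonglongrightarrow> \<phi> x"
  shows "(\<lambda>k. \<integral>x. s k x \<partial>\<mu>) \<longlonglongrightarrow> (\<integral>x. \<phi> x \<partial>\<mu>)"
proof (rule integral_dominated_convergence[where w="\<lambda>_. B"])
  have space: "space \<mu> = topspace X"
    using sets_eq_imp_space_eq[OF \<mu>(2)] by simp
  show "\<phi> \<in> borel_measurable \<mu>" "s k \<in> borel_measurable \<mu>" for k
    using borel_measurable_bcont[OF \<mu>(2)] \<phi> s by blast+
  show "integrable \<mu> (\<lambda>_. B)"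
    using \<mu>(1) by (simp add: finite_measure.integrable_const)
  show "AE x in \<mu>. (\<lambda>k. s k x) \<longlonglongrightarrow> \<phi> x"
    using lim by (intro AE_I2) (simp add: space)
  show "AE x in \<mu>. norm (s k x) \<le> B" for k
    using B by (intro AE_I2) (simp add: space)
qed

lemma eventually_integral_gt_of_lower_approximating_class:
  assumes D: "lower_approximating_class X D" "countable D"
    and \<nu>: "\<And>n. prob_space (\<nu> n)" "\<And>n. sets (\<nu> n) = sets (borel_of X)"
    and \<mu>: "prob_space \<mu>" "sets \<mu> = sets (borel_of X)"
    and conv: "\<And>\<psi>. \<psi> \<in> D \<Longrightarrow> (\<lambda>n. \<integral>x. \<psi> x \<partial>\<nu> n) \<longlonglongrightarrow> (\<integral>x. \<psi> x \<partial>\<mu>)"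
    and \<phi>: "\<phi> \<in> bcont X" "\<forall>y\<in>topspace X. 0 \<le> \<phi> y" and e: "e > 0"
  shows "eventually (\<lambda>n. (\<integral>x. \<phi> x \<partial>\<nu> n) > (\<integral>x. \<phi> x \<partial>\<mu>) - e) sequentially"
proof -
  obtain s where s: "\<And>k. s k \<in> D" "\<And>k x. x \<in> topspace X \<Longrightarrow> s k x \<le> \<phi> x"
    "\<And>x. x \<in> topspace X \<Longrightarrow> (\<lambda>k. s k x) \<longlonglongrightarrow> \<phi> x"
    using lower_approximating_class_increasing_approx[OF D \<phi>] by blast
  have s_bcont: "s k \<in> bcont X" and s_nonneg: "x \<in> topspace X \<Longrightarrow> 0 \<le> s k x" for k x
    using lower_approximating_classD(1,2)[OF D(1)] s(1) by blast+
  obtain B where B: "\<forall>x\<in>topspace X. \<bar>\<phi> x\<bar> \<le> B"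
    using bcont_bounded[OF \<phi>(1)] by blast
  have "(\<lambda>k. \<integral>x. s k x \<partial>\<mu>) \<longlonglongrightarrow> (\<integral>x. \<phi> x \<partial>\<mu>)"
  proof (rule tendsto_integral_bcont[OF prob_space.finite_measure[OF \<mu>(1)] \<mu>(2) s_bcont \<phi>(1) _ s(3)])
    fix k x assume x: "x \<in> topspace X"
    show "\<bar>s k x\<bar> \<le> B"
      using s(2)[OF x, of k] s_nonneg[OF x, of k] B x by force
  qed
  then have "eventually (\<lambda>k. \<bar>(\<integral>x. s k x \<partial>\<mu>) - (\<integral>x. \<phi> x \<partial>\<mu>)\<bar> < e / 2) sequentially"
    using e unfolding tendsto_iff dist_real_def by (meson half_gt_zero)
  then obtain k where "\<bar>(\<integral>x. s k x \<partial>\<mu>) - (\<integral>x. \<phi> x \<partial>\<mu>)\<bar> < e / 2"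
    unfolding eventually_sequentially by blast
  then have k: "(\<integral>x. s k x \<partial>\<mu>) > (\<integral>x. \<phi> x \<partial>\<mu>) - e / 2"
    by linarith
  have "eventually (\<lambda>n. \<bar>(\<integral>x. s k x \<partial>\<nu> n) - (\<integral>x. s k x \<partial>\<mu>)\<bar> < e / 2) sequentially"
    using conv[OF s(1)] e unfolding tendsto_iff dist_real_def by (meson half_gt_zero)
  then show ?thesis
  proof (rule eventually_mono)
    fix n assume n: "\<bar>(\<integral>x. s k x \<partial>\<nu> n) - (\<integral>x. s k x \<partial>\<mu>)\<bar> < e / 2"
    have "space (\<nu> n) = topspace X"
      using sets_eq_imp_space_eq[OF \<nu>(2)] by simp
    then have "(\<integral>x. s k x \<partial>\<nu> n) \<le> (\<integral>x. \<phi> x \<partial>\<nu> n)"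
      using \<nu> s(2) s_bcont \<phi>(1)
      by (intro integral_mono integrable_bcont[OF prob_space.finite_measure]) auto
    then show "(\<integral>x. \<phi> x \<partial>\<nu> n) > (\<integral>x. \<phi> x \<partial>\<mu>) - e"
      using n k by linarith
  qed
qed

lemma tendsto_integral_of_lower_approximating_class:
  assumes D: "lower_approximating_class X D" "countable D"
    and \<nu>: "\<And>n. prob_space (\<nu> n)" "\<And>n. sets (\<nu> n) = sets (borel_of X)"
    and \<mu>: "prob_space \<mu>" "sets \<mu> = sets (borel_of X)"
    and conv: "\<And>\<psi>. \<psi> \<in> D \<Longrightarrow> (\<lambda>n. \<integral>x. \<psi> x \<partial>\<nu> n) \<longlonglongrightarrow> (\<integral>x. \<psi> x \<partial>\<mu>)"
    and \<phi>: "\<phi> \<in> bcont X"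
  shows "(\<lambda>n. \<integral>x. \<phi> x \<partial>\<nu> n) \<longlonglongrightarrow> (\<integral>x. \<phi> x \<partial>\<mu>)"
proof -
  obtain B where B: "\<forall>x\<in>topspace X. \<bar>\<phi> x\<bar> \<le> B"
    using bcont_bounded[OF \<phi>] by blast
  have integral_affine: "(\<integral>x. a * \<phi> x + B \<partial>\<rho>) = a * (\<integral>x. \<phi> x \<partial>\<rho>) + B"
    if "prob_space \<rho>" "sets \<rho> = sets (borel_of X)" for \<rho> a
  proof -
    interpret prob_space \<rho> by fact
    show ?thesis
      using integrable_bcont[OF finite_measure that(2) \<phi>] by (simp add: prob_space)
  qed
  have lower: "eventually (\<lambda>n. a * (\<integral>x. \<phi> x \<partial>\<nu> n) > a * (\<integral>x. \<phi> x \<partial>\<mu>) - e) sequentially"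
    if "a = 1 \<or> a = -1" "e > 0" for a e
  proof -
    have "\<forall>y\<in>topspace X. 0 \<le> a * \<phi> y + B"
      using B that(1) by force
    then have "eventually (\<lambda>n. (\<integral>x. a * \<phi> x + B \<partial>\<nu> n) > (\<integral>x. a * \<phi> x + B \<partial>\<mu>) - e) sequentially"
      using eventually_integral_gt_of_lower_approximating_class[OF D \<nu> \<mu> conv bcont_affine[OF \<phi>] _ that(2)]
      by blast
    then show ?thesis
      by (simp add: integral_affine \<nu> \<mu>)
  qed
  show ?thesis
  proof (rule LIMSEQ_I)
    fix e :: real assume "e > 0"
    then have "eventually (\<lambda>n. norm ((\<integral>x. \<phi> x \<partial>\<nu> n) - (\<integral>x. \<phi> x \<partial>\<mu>)) < e) sequentially"
      using eventually_conj[OF lower[of 1 e] lower[of "-1" e]] by (auto elim: eventually_mono)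
    then show "\<exists>n0. \<forall>n\<ge>n0. norm ((\<integral>x. \<phi> x \<partial>\<nu> n) - (\<integral>x. \<phi> x \<partial>\<mu>)) < e"
      unfolding eventually_sequentially .
  qed
qed

definition list_max_fun :: "('a \<Rightarrow> real) list \<Rightarrow> 'a \<Rightarrow> real" where
  "list_max_fun \<psi>s x = foldr (\<lambda>\<psi>. max (\<psi> x)) \<psi>s 0"

definition max_closure :: "('a \<Rightarrow> real) set \<Rightarrow> ('a \<Rightarrow> real) set" where
  "max_closure G = list_max_fun ` lists G"

lemma list_max_fun_simps [simp]:
  "list_max_fun [] = (\<lambda>x. 0)"
  "list_max_fun (\<psi> # \<psi>s) = (\<lambda>x. max (\<psi> x) (list_max_fun \<psi>s x))"
  by (simp_all add: list_max_fun_def fun_eq_iff)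

lemma list_max_fun_nonneg: "0 \<le> list_max_fun \<psi>s x"
  by (induction \<psi>s) auto

lemma list_max_fun_append:
  "list_max_fun (\<psi>s1 @ \<psi>s2) = (\<lambda>x. max (list_max_fun \<psi>s1 x) (list_max_fun \<psi>s2 x))"
  by (induction \<psi>s1) (auto simp: fun_eq_iff max.assoc list_max_fun_nonneg max_absorb2)

lemma list_max_fun_bcont: "set \<psi>s \<subseteq> bcont X \<Longrightarrow> list_max_fun \<psi>s \<in> bcont X"
proof (induction \<psi>s)
  case (Cons \<psi> \<psi>s)
  then have \<psi>: "\<psi> \<in> bcont X" and \<psi>s: "list_max_fun \<psi>s \<in> bcont X"
    by auto
  obtain B1 where B1: "\<forall>x\<in>topspace X. \<bar>\<psi> x\<bar> \<le> B1"
    using bcont_bounded[OF \<psi>] ..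
  obtain B2 where B2: "\<forall>x\<in>topspace X. \<bar>list_max_fun \<psi>s x\<bar> \<le> B2"
    using bcont_bounded[OF \<psi>s] ..
  have bound: "\<bar>max (\<psi> x) (list_max_fun \<psi>s x)\<bar> \<le> max B1 B2" if "x \<in> topspace X" for x
    using B1 B2 that by (auto simp: abs_le_iff)
  have cont: "continuous_map X euclideanreal (\<lambda>x. max (\<psi> x) (list_max_fun \<psi>s x))"
    using bcont_continuous[OF \<psi>] bcont_continuous[OF \<psi>s] by (rule continuous_map_real_max)
  show "list_max_fun (\<psi> # \<psi>s) \<in> bcont X"
    unfolding list_max_fun_simps by (rule bcontI[OF cont bound])
qed (simp add: bcontI[where B=0])

lemma countable_max_closure: "countable G \<Longrightarrow> countable (max_closure G)"
  unfolding max_closure_def by (intro countable_image countable_lists)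

lemma lower_approximating_class_max_closure:
  assumes G: "G \<subseteq> bcont X" "\<And>\<psi> x. \<psi> \<in> G \<Longrightarrow> 0 \<le> \<psi> x"
    and approx: "\<And>\<phi> x q. \<phi> \<in> bcont X \<Longrightarrow> \<forall>y\<in>topspace X. 0 \<le> \<phi> y \<Longrightarrow> x \<in> topspace X \<Longrightarrow>
        0 < q \<Longrightarrow> q < \<phi> x \<Longrightarrow> \<exists>\<psi>\<in>G. (\<forall>y\<in>topspace X. \<psi> y \<le> \<phi> y) \<and> q \<le> \<psi> x"
  shows "lower_approximating_class X (max_closure G)"
proof -
  have in_bcont: "list_max_fun \<psi>s \<in> bcont X" if "\<psi>s \<in> lists G" for \<psi>s
    using that G(1) by (intro list_max_fun_bcont) auto
  have G_sub: "G \<subseteq> max_closure G"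
  proof
    fix \<psi> assume "\<psi> \<in> G"
    have "list_max_fun [\<psi>] = \<psi>"
    proof
      fix x
      show "list_max_fun [\<psi>] x = \<psi> x"
        using G(2)[OF \<open>\<psi> \<in> G\<close>, of x] by simp
    qed
    then show "\<psi> \<in> max_closure G"
      unfolding max_closure_def using \<open>\<psi> \<in> G\<close> by (metis image_eqI lists.Cons lists.Nil)
  qed
  show ?thesis
  proof (rule lower_approximating_classI)
    show "max_closure G \<subseteq> bcont X"
      using in_bcont unfolding max_closure_def by blast
    show "0 \<le> \<psi> x" if "\<psi> \<in> max_closure G" for \<psi> x
      using that unfolding max_closure_def by (auto simp: list_max_fun_nonneg)
    show "(\<lambda>x. 0) \<in> max_closure G"
      unfolding max_closure_def by (rule image_eqI[where x="[]"]) auto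
    show "(\<lambda>x. max (\<psi>1 x) (\<psi>2 x)) \<in> max_closure G"
      if \<psi>12: "\<psi>1 \<in> max_closure G" "\<psi>2 \<in> max_closure G" for \<psi>1 \<psi>2
    proof -
      obtain \<psi>s1 \<psi>s2 where "\<psi>s1 \<in> lists G" "\<psi>s2 \<in> lists G"
        "\<psi>1 = list_max_fun \<psi>s1" "\<psi>2 = list_max_fun \<psi>s2"
        using \<psi>12 unfolding max_closure_def by blast
      then have "(\<lambda>x. max (\<psi>1 x) (\<psi>2 x)) = list_max_fun (\<psi>s1 @ \<psi>s2)" "\<psi>s1 @ \<psi>s2 \<in> lists G"
        by (simp_all add: list_max_fun_append)
      then show ?thesis
        unfolding max_closure_def by blast
    qed
    show "\<exists>\<psi>\<in>max_closure G. (\<forall>y\<in>topspace X. \<psi> y \<le> \<phi> y) \<and> q \<le> \<psi> x"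
      if "\<phi> \<in> bcont X" "\<forall>y\<in>topspace X. 0 \<le> \<phi> y" "x \<in> topspace X" "0 < q" "q < \<phi> x" for \<phi> x q
      using approx[OF that] G_sub by blast
  qed
qed

section \<open>Tent functions on a power of a metric space\<close>

abbreviation power_top :: "'b metric \<Rightarrow> ('i \<Rightarrow> 'b) topology" where
  "power_top m \<equiv> product_topology (\<lambda>_. mtopology_of m) UNIV"

lemma openin_mtopology_of_ball:
  assumes "openin (mtopology_of m) W" "z \<in> W"
  shows "\<exists>r>0. \<forall>y\<in>mspace m. mdist m z y < r \<longrightarrow> y \<in> W"
proof -
  interpret Metric_space "mspace m" "mdist m"
    by (rule Metric_space_mspace_mdist)
  have "openin mtopology W"
    using assms(1) by (simp add: mtopology_of_def)
  then obtain r where r: "r > 0" "mball z r \<subseteq> W"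
    using assms(2) unfolding openin_mtopology by blast
  have "z \<in> mspace m"
    using assms openin_subset by fastforce
  show ?thesis
  proof (intro exI[of _ r] conjI ballI impI)
    fix y assume "y \<in> mspace m" "mdist m z y < r"
    then have "y \<in> mball z r"
      using \<open>z \<in> mspace m\<close> by simp
    then show "y \<in> W"
      using r(2) by blast
  qed (rule r(1))
qed

lemma power_top_neighbourhood:
  fixes m :: "'b metric" and x :: "'i \<Rightarrow> 'b"
  assumes "openin (power_top m) U" "x \<in> U"
  shows "\<exists>J \<epsilon>. finite J \<and> \<epsilon> > 0 \<and>
           (\<forall>y\<in>topspace (power_top m). (\<forall>i\<in>J. mdist m (x i) (y i) < \<epsilon>) \<longrightarrow> y \<in> U)"
proof -
  have "\<forall>x\<in>U. \<exists>V. finite {i \<in> UNIV. V i \<noteq> topspace (mtopology_of m)} \<and>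
            (\<forall>i\<in>UNIV. openin (mtopology_of m) (V i)) \<and> x \<in> Pi\<^sub>E UNIV V \<and> Pi\<^sub>E UNIV V \<subseteq> U"
    using assms(1) by (simp only: openin_product_topology_alt)
  from bspec[OF this assms(2)] obtain V where
    "finite {i \<in> UNIV. V i \<noteq> topspace (mtopology_of m)} \<and>
     (\<forall>i\<in>UNIV. openin (mtopology_of m) (V i)) \<and> x \<in> Pi\<^sub>E UNIV V \<and> Pi\<^sub>E UNIV V \<subseteq> U"
    by (elim exE)
  then have V: "finite {i. V i \<noteq> mspace m}" "\<And>i. openin (mtopology_of m) (V i)"
      "x \<in> Pi\<^sub>E UNIV V" "Pi\<^sub>E UNIV V \<subseteq> U"
    by simp_all
  define J where "J = {i. V i \<noteq> mspace m}"
  have "x i \<in> V i" for i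
    using V(3) by auto
  then have "\<exists>r>0. \<forall>y\<in>mspace m. mdist m (x i) y < r \<longrightarrow> y \<in> V i" for i
    by (rule openin_mtopology_of_ball[OF V(2)])
  then have "\<forall>i. \<exists>r. r > 0 \<and> (\<forall>y\<in>mspace m. mdist m (x i) y < r \<longrightarrow> y \<in> V i)"
    by blast
  from choice[OF this] obtain r
    where r: "\<forall>i. r i > 0 \<and> (\<forall>y\<in>mspace m. mdist m (x i) y < r i \<longrightarrow> y \<in> V i)"
    by (elim exE)
  define \<epsilon> where "\<epsilon> = Min (insert 1 (r ` J))"
  have "finite J"
    using V(1) unfolding J_def .
  then have \<epsilon>: "\<epsilon> > 0" "\<And>i. i \<in> J \<Longrightarrow> \<epsilon> \<le> r i"
    unfolding \<epsilon>_def using r by auto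
  have "y \<in> U" if y: "y \<in> topspace (power_top m)" "\<forall>i\<in>J. mdist m (x i) (y i) < \<epsilon>" for y
  proof -
    have "y i \<in> V i" for i
    proof (cases "i \<in> J")
      case True
      have "y i \<in> mspace m"
        using y(1) by auto
      moreover have "mdist m (x i) (y i) < r i"
        using y(2) \<epsilon>(2)[OF True] True by fastforce
      ultimately show ?thesis
        using r by blast
    next
      case False
      then show ?thesis
        using y(1) unfolding J_def by auto
    qed
    then show ?thesis
      using V(4) y(1) by auto
  qed
  then show ?thesis
    using \<open>finite J\<close> \<epsilon>(1) by blast
qed

definition tent :: "'b metric \<Rightarrow> int \<Rightarrow> 'b \<Rightarrow> real \<Rightarrow> (int \<Rightarrow> 'b) \<Rightarrow> real" where
  "tent m j c r u = max 0 (min 1 (2 - 2 / r * mdist m (u j) c))"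

definition tent_product :: "'b metric \<Rightarrow> (int \<times> 'b \<times> real) list \<Rightarrow> (int \<Rightarrow> 'b) \<Rightarrow> real" where
  "tent_product m L u = foldr (\<lambda>(j, c, r). min (tent m j c r u)) L 1"

definition tent_products :: "'b metric \<Rightarrow> 'b set \<Rightarrow> ((int \<Rightarrow> 'b) \<Rightarrow> real) set" where
  "tent_products m C = (\<lambda>(q, L) u. q * tent_product m L u) `
     ((\<rat> \<inter> {0<..}) \<times> lists (UNIV \<times> C \<times> (\<rat> \<inter> {0<..})))"

lemma tent_nonneg: "0 \<le> tent m j c r u" and tent_le_1: "tent m j c r u \<le> 1"
  unfolding tent_def by auto

lemma tent_eq_1: "r > 0 \<Longrightarrow> mdist m (u j) c \<le> r / 2 \<Longrightarrow> tent m j c r u = 1"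
  unfolding tent_def by (simp add: field_simps)

lemma tent_pos_imp_mdist_less:
  assumes "r > 0" "0 < tent m j c r u"
  shows "mdist m (u j) c < r"
proof -
  have "0 < 2 - 2 / r * mdist m (u j) c"
    using assms(2) unfolding tent_def by linarith
  then show ?thesis
    using assms(1) by (simp add: field_simps)
qed

lemma tent_product_Cons [simp]:
  "tent_product m ((j, c, r) # L) u = min (tent m j c r u) (tent_product m L u)"
  by (simp add: tent_product_def)

lemma tent_product_Nil [simp]: "tent_product m [] = (\<lambda>u. 1)"
  by (simp add: tent_product_def fun_eq_iff)

lemma tent_product_nonneg: "0 \<le> tent_product m L u" and tent_product_le_1: "tent_product m L u \<le> 1"
  by (induction L) (auto simp: tent_nonneg tent_le_1)

lemma tent_product_le_tent: "(j, c, r) \<in> set L \<Longrightarrow> tent_product m L u \<le> tent m j c r u"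
  by (induction L) auto

lemma tent_product_eq_1: "(\<And>j c r. (j, c, r) \<in> set L \<Longrightarrow> tent m j c r u = 1) \<Longrightarrow> tent_product m L u = 1"
  by (induction L) auto

lemma tent_product_eq_1_near_centres:
  assumes L: "set L = (\<lambda>i. (i, c i, r)) ` J" and r: "r > 0"
    and near: "\<And>i. i \<in> J \<Longrightarrow> mdist m (u i) (c i) \<le> r / 2"
  shows "tent_product m L u = 1"
proof (rule tent_product_eq_1)
  fix j c' r' assume "(j, c', r') \<in> set L"
  then have "j \<in> J" "c' = c j" "r' = r"
    using L by auto
  then show "tent m j c' r' u = 1"
    using r near by (simp add: tent_eq_1)
qed

lemma mdist_less_of_tent_product_pos:
  assumes L: "set L = (\<lambda>i. (i, c i, r)) ` J" and r: "r > 0"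
    and pos: "0 < tent_product m L u" and i: "i \<in> J"
  shows "mdist m (u i) (c i) < r"
proof -
  have "(i, c i, r) \<in> set L"
    using L i by blast
  then have "0 < tent m i (c i) r u"
    using pos tent_product_le_tent[of i "c i" r L m u] by linarith
  then show ?thesis
    by (rule tent_pos_imp_mdist_less[OF r])
qed

lemma continuous_map_tent:
  assumes "c \<in> mspace m"
  shows "continuous_map (power_top m) euclideanreal (tent m j c r)"
proof -
  define d where "d u = mdist m (u j) c" for u
  have "continuous_map (power_top m) euclideanreal d"
    unfolding d_def using assms
    by (intro continuous_map_mdist continuous_map_product_projection) auto
  then have "continuous_map (power_top m) euclideanreal (\<lambda>u. max 0 (min 1 (2 - 2 / r * d u)))"
    by (intro continuous_intros) auto
  then show ?thesis
    unfolding tent_def d_def .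
qed

lemma continuous_map_tent_product:
  assumes "set L \<subseteq> UNIV \<times> mspace m \<times> UNIV"
  shows "continuous_map (power_top m) euclideanreal (tent_product m L)"
  using assms
proof (induction L)
  case (Cons a L)
  obtain j c r where a: "a = (j, c, r)"
    by (cases a) auto
  have "continuous_map (power_top m) euclideanreal (\<lambda>u. min (tent m j c r u) (tent_product m L u))"
    using Cons a by (intro continuous_map_real_min continuous_map_tent) auto
  then show ?case
    by (simp add: a)
qed simp

lemma countable_tent_products:
  assumes "countable C"
  shows "countable (tent_products m C)"
proof -
  have Q: "countable (\<rat> \<inter> {0::real<..})"
    by (rule countable_Int1[OF countable_rat])
  have entries: "countable ((UNIV :: int set) \<times> C \<times> (\<rat> \<inter> {0::real<..}))"
    by (intro countable_SIGMA countableI_type assms Q)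
  have "countable ((\<rat> \<inter> {0::real<..}) \<times> lists ((UNIV :: int set) \<times> C \<times> (\<rat> \<inter> {0::real<..})))"
    by (intro entries Q countable_lists countable_SIGMA)
  then show ?thesis
    unfolding tent_products_def by (rule countable_image)
qed

lemma tent_products_bcont:
  assumes "C \<subseteq> mspace m" "\<psi> \<in> tent_products m C"
  shows "\<psi> \<in> bcont (power_top m)" "0 \<le> \<psi> u"
proof -
  obtain p where p: "p \<in> (\<rat> \<inter> {0<..}) \<times> lists (UNIV \<times> C \<times> (\<rat> \<inter> {0<..}))"
      "\<psi> = (\<lambda>(q, L) u. q * tent_product m L u) p"
    using assms(2) unfolding tent_products_def by (rule imageE)
  obtain q L where "p = (q, L)"
    by (cases p)
  then have qL: "q > 0" "L \<in> lists (UNIV \<times> C \<times> (\<rat> \<inter> {0<..}))"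
      "\<psi> = (\<lambda>u. q * tent_product m L u)"
    using p by auto
  have "continuous_map (power_top m) euclideanreal (tent_product m L)"
    using qL(2) assms(1) by (intro continuous_map_tent_product) auto
  then have cont: "continuous_map (power_top m) euclideanreal (\<lambda>u. q * tent_product m L u)"
    by (intro continuous_intros)
  have bound: "\<bar>q * tent_product m L u\<bar> \<le> q" for u
    using qL(1) tent_product_nonneg[of m L u] tent_product_le_1[of m L u]
    by (simp add: abs_mult mult_left_le)
  show "\<psi> \<in> bcont (power_top m)"
    unfolding qL(3) by (rule bcontI[OF cont bound])
  show "0 \<le> \<psi> u"
    using qL(1) tent_product_nonneg[of m L u] unfolding qL(3) by simp
qed

text \<open>Centres within \<open>\<epsilon>/4\<close> of x and a common radius between \<open>\<epsilon>/2\<close> and \<open>3\<epsilon>/4\<close> make the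
  tent product equal 1 at x and vanish outside the \<open>\<epsilon>\<close>-cylinder around x.\<close>
lemma tent_product_bump:
  assumes C: "C \<subseteq> mspace m" and dense: "\<And>x e. x \<in> mspace m \<Longrightarrow> e > 0 \<Longrightarrow> \<exists>c\<in>C. mdist m x c < e"
    and U: "openin (power_top m) U" "x \<in> U"
  shows "\<exists>L\<in>lists (UNIV \<times> C \<times> (\<rat> \<inter> {0<..})). tent_product m L x = 1 \<and>
           (\<forall>y\<in>topspace (power_top m). 0 < tent_product m L y \<longrightarrow> y \<in> U)"
proof -
  obtain J \<epsilon> where J: "finite J" "\<epsilon> > 0"
    "\<forall>y\<in>topspace (power_top m). (\<forall>i\<in>J. mdist m (x i) (y i) < \<epsilon>) \<longrightarrow> y \<in> U"
    using power_top_neighbourhood[OF U] by blast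
  have x_in: "x i \<in> mspace m" for i
    using U openin_subset by fastforce
  have "\<exists>c\<in>C. mdist m (x i) c < \<epsilon> / 4" for i
    by (rule dense[OF x_in]) (use J(2) in simp)
  then have "\<forall>i. \<exists>c. c \<in> C \<and> mdist m (x i) c < \<epsilon> / 4"
    by blast
  from choice[OF this] obtain cc where cc: "\<And>i. cc i \<in> C" "\<And>i. mdist m (x i) (cc i) < \<epsilon> / 4"
    by blast
  obtain r where r: "r \<in> \<rat>" "\<epsilon> / 2 < r" "r < 3 * \<epsilon> / 4"
    using Rats_dense_in_real[of "\<epsilon> / 2" "3 * \<epsilon> / 4"] J(2) by auto
  have r_pos: "r > 0"
    using r(2) J(2) by linarith
  define L where "L = map (\<lambda>i. (i, cc i, r)) (sorted_list_of_set J)"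
  have set_L: "set L = (\<lambda>i. (i, cc i, r)) ` J"
    unfolding L_def using J(1) by simp
  have "L \<in> lists (UNIV \<times> C \<times> (\<rat> \<inter> {0<..}))"
    using set_L cc(1) r(1) r_pos by auto
  moreover have "mdist m (x i) (cc i) \<le> r / 2" for i
    using cc(2)[of i] r by linarith
  then have "tent_product m L x = 1"
    by (rule tent_product_eq_1_near_centres[OF set_L r_pos])
  moreover have "y \<in> U" if y: "y \<in> topspace (power_top m)" "0 < tent_product m L y" for y
  proof -
    have "mdist m (x i) (y i) < \<epsilon>" if "i \<in> J" for i
    proof -
      have "mdist m (y i) (cc i) < r"
        by (rule mdist_less_of_tent_product_pos[OF set_L r_pos y(2) that])
      moreover have "mdist m (x i) (y i) \<le> mdist m (x i) (cc i) + mdist m (cc i) (y i)"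
        using x_in y(1) C cc(1) by (intro mdist_triangle) auto
      ultimately show ?thesis
        using cc(2)[of i] r by (simp add: mdist_commute)
    qed
    then show ?thesis
      using J(3) y(1) by blast
  qed
  ultimately show ?thesis
    by blast
qed

lemma tent_products_approx:
  assumes C: "C \<subseteq> mspace m" and dense: "\<And>x e. x \<in> mspace m \<Longrightarrow> e > 0 \<Longrightarrow> \<exists>c\<in>C. mdist m x c < e"
    and \<phi>: "\<phi> \<in> bcont (power_top m)" "\<forall>y\<in>topspace (power_top m). 0 \<le> \<phi> y"
    and x: "x \<in> topspace (power_top m)" and q: "0 < q" "q < \<phi> x"
  shows "\<exists>\<psi>\<in>tent_products m C. (\<forall>y\<in>topspace (power_top m). \<psi> y \<le> \<phi> y) \<and> q \<le> \<psi> x"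
proof -
  obtain q' where q': "q' \<in> \<rat>" "q < q'" "q' < \<phi> x"
    using Rats_dense_in_real q(2) by blast
  define U where "U = {y \<in> topspace (power_top m). \<phi> y \<in> {q'<..}}"
  have "openin (power_top m) U"
    unfolding U_def by (rule openin_continuous_map_preimage[OF bcont_continuous[OF \<phi>(1)]]) simp
  moreover have "x \<in> U"
    using x q' unfolding U_def by auto
  ultimately obtain L where L: "L \<in> lists (UNIV \<times> C \<times> (\<rat> \<inter> {0<..}))" "tent_product m L x = 1"
    "\<forall>y\<in>topspace (power_top m). 0 < tent_product m L y \<longrightarrow> y \<in> U"
    using tent_product_bump[OF C dense] by blast
  define \<psi> where "\<psi> u = q' * tent_product m L u" for u
  have "\<psi> \<in> tent_products m C"
    unfolding tent_products_def \<psi>_def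
    using q' q L(1) by (intro image_eqI[where x="(q', L)"]) auto
  moreover have "\<psi> y \<le> \<phi> y" if y: "y \<in> topspace (power_top m)" for y
  proof (cases "tent_product m L y > 0")
    case True
    then have "y \<in> U"
      using L(3) y by blast
    moreover have "q' * tent_product m L y \<le> q'"
      using q' q tent_product_le_1[of m L y] by (simp add: mult_left_le)
    ultimately show ?thesis
      unfolding \<psi>_def U_def by simp
  next
    case False
    then have "tent_product m L y = 0"
      using tent_product_nonneg[of m L y] by linarith
    then show ?thesis
      unfolding \<psi>_def using \<phi>(2) y by simp
  qed
  moreover have "q \<le> \<psi> x"
    unfolding \<psi>_def using L(2) q'(2) by simp
  ultimately show ?thesis
    by blast
qed

lemma lower_approximating_class_tent_products:
  assumes "C \<subseteq> mspace m" "\<And>x e. x \<in> mspace m \<Longrightarrow> e > 0 \<Longrightarrow> \<exists>c\<in>C. mdist m x c < e"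
  shows "lower_approximating_class (power_top m) (max_closure (tent_products m C))"
proof (rule lower_approximating_class_max_closure)
  show "tent_products m C \<subseteq> bcont (power_top m)"
    using tent_products_bcont(1)[OF assms(1)] by blast
  show "0 \<le> \<psi> u" if "\<psi> \<in> tent_products m C" for \<psi> u
    using tent_products_bcont(2)[OF assms(1) that] .
qed (rule tent_products_approx[OF assms])

section \<open>Polynomials with rational coefficients are dense in the path space\<close>

lemma mspace_pathspace:
  "mspace (pathspace T) = {f. f \<in> extensional {0..T} \<and> continuous_on {0..T} f}"
proof -
  have "compactin (top_of_set {0..T}) (topspace (top_of_set {0..T}))"
    by (simp add: compactin_subtopology compactin_euclidean_iff)
  then show ?thesis
    unfolding pathspace_def by (subst compactin_mspace_cfunspace) auto
qed

definition rat_poly_paths :: "real \<Rightarrow> (real \<Rightarrow> real) set" where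
  "rat_poly_paths T = (\<lambda>as. restrict (\<lambda>t. \<Sum>i<length as. as ! i * t ^ i) {0..T}) ` lists \<rat>"

lemma countable_rat_poly_paths: "countable (rat_poly_paths T)"
  unfolding rat_poly_paths_def by (intro countable_image countable_lists countable_rat)

lemma rat_poly_paths_subset: "rat_poly_paths T \<subseteq> mspace (pathspace T)"
proof
  fix p assume "p \<in> rat_poly_paths T"
  then obtain as where p: "p = restrict (\<lambda>t. \<Sum>i<length as. as ! i * t ^ i) {0..T}"
    unfolding rat_poly_paths_def by blast
  have "continuous_on {0..T} (\<lambda>t. \<Sum>i<length as. as ! i * t ^ i)"
    by (intro continuous_intros)
  then have "continuous_on {0..T} p"
    unfolding p by (rule continuous_on_eq) auto
  then show "p \<in> mspace (pathspace T)"
    unfolding mspace_pathspace p by simp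
qed

lemma sum_power_coeff_diff_le:
  fixes a b :: "nat \<Rightarrow> real"
  assumes t: "0 \<le> t" "t \<le> T" and ab: "\<And>i. \<bar>a i - b i\<bar> \<le> \<delta>"
  shows "\<bar>(\<Sum>i\<le>n. a i * t ^ i) - (\<Sum>i\<le>n. b i * t ^ i)\<bar> \<le> \<delta> * (\<Sum>i\<le>n. T ^ i)"
proof -
  have "0 \<le> \<delta>"
    using ab[of 0] abs_ge_zero[of "a 0 - b 0"] by linarith
  have "\<bar>(\<Sum>i\<le>n. a i * t ^ i) - (\<Sum>i\<le>n. b i * t ^ i)\<bar> = \<bar>\<Sum>i\<le>n. (a i - b i) * t ^ i\<bar>"
    by (simp add: sum_subtractf left_diff_distrib)
  also have "\<dots> \<le> (\<Sum>i\<le>n. \<delta> * T ^ i)"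
  proof (rule order.trans[OF sum_abs sum_mono])
    fix i
    have "\<bar>t ^ i\<bar> \<le> T ^ i"
      using t by (simp add: power_mono power_abs)
    then show "\<bar>(a i - b i) * t ^ i\<bar> \<le> \<delta> * T ^ i"
      using ab[of i] \<open>0 \<le> \<delta>\<close> by (simp add: abs_mult mult_mono)
  qed
  also have "\<dots> = \<delta> * (\<Sum>i\<le>n. T ^ i)"
    by (simp add: sum_distrib_left)
  finally show ?thesis .
qed

lemma rat_poly_paths_dense:
  assumes T: "T \<ge> 0" and f: "f \<in> mspace (pathspace T)" and e: "e > 0"
  shows "\<exists>p\<in>rat_poly_paths T. mdist (pathspace T) f p < e"
proof -
  have f_cont: "continuous_on {0..T} f"
    using f by (simp add: mspace_pathspace)
  obtain g where g: "real_polynomial_function g" "\<And>t. t \<in> {0..T} \<Longrightarrow> \<bar>f t - g t\<bar> < e / 4"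
    using Stone_Weierstrass_real_polynomial_function[OF compact_Icc f_cont, of "e / 4"] e by auto
  obtain a n where g_eq: "g = (\<lambda>t. \<Sum>i\<le>n. a i * t ^ i)"
    using real_polynomial_function_imp_sum[OF g(1)] by blast
  define K where "K = (\<Sum>i\<le>n. T ^ i)"
  have K: "K \<ge> 1"
    unfolding K_def using T by (simp add: sum.atMost_shift sum_nonneg)
  define \<delta> where "\<delta> = e / (4 * K)"
  have \<delta>: "\<delta> > 0"
    unfolding \<delta>_def using e K by simp
  have "\<exists>c. c \<in> \<rat> \<and> \<bar>a i - c\<bar> < \<delta>" for i
  proof -
    obtain c where "c \<in> \<rat>" "a i - \<delta> < c" "c < a i"
      using Rats_dense_in_real[of "a i - \<delta>" "a i"] \<delta> by auto
    then show ?thesis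
      by (intro exI[of _ c]) auto
  qed
  then have "\<forall>i. \<exists>c. c \<in> \<rat> \<and> \<bar>a i - c\<bar> < \<delta>"
    by blast
  from choice[OF this] obtain b where b: "\<And>i. b i \<in> \<rat>" "\<And>i. \<bar>a i - b i\<bar> < \<delta>"
    by blast
  define p where "p = restrict (\<lambda>t. \<Sum>i<Suc n. b i * t ^ i) {0..T}"
  have "p \<in> rat_poly_paths T"
    unfolding rat_poly_paths_def p_def
    using b(1) by (intro image_eqI[where x="map b [0..<Suc n]"]) (auto simp del: upt_Suc)
  moreover have "\<bar>f t - p t\<bar> \<le> e / 2" if t: "t \<in> {0..T}" for t
  proof -
    have "\<bar>g t - p t\<bar> \<le> \<delta> * K"
      using sum_power_coeff_diff_le[of t T a b \<delta> n] t b(2)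
      unfolding g_eq p_def K_def by (simp add: lessThan_Suc_atMost less_imp_le)
    also have "\<delta> * K = e / 4"
      unfolding \<delta>_def using K by simp
    finally show ?thesis
      using g(2)[OF t] by linarith
  qed
  then have "mdist (pathspace T) f p \<le> e / 2"
    unfolding pathspace_def
    by (intro mdist_cfunspace_le) (use e in \<open>auto simp: dist_real_def\<close>)
  ultimately show ?thesis
    using e by (intro bexI[of _ p]) auto
qed

lemma countable_lower_approximating_class_seqtop:
  assumes "T \<ge> 0"
  shows "\<exists>D. countable D \<and> lower_approximating_class (seqtop T) D"
proof (intro exI conjI)
  show "countable (max_closure (tent_products (pathspace T) (rat_poly_paths T)))"
    by (intro countable_max_closure countable_tent_products countable_rat_poly_paths)
  show "lower_approximating_class (seqtop T) (max_closure (tent_products (pathspace T) (rat_poly_paths T)))"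
    unfolding seqtop_def pathtop_def
    using rat_poly_paths_subset rat_poly_paths_dense[OF assms]
    by (intro lower_approximating_class_tent_products) auto
qed

lemma tendsto_of_dist_less_inverse_Suc:
  assumes "\<And>k. eventually (\<lambda>n. dist (f n) l < 1 / Suc k) F"
  shows "(f \<longlongrightarrow> l) F"
  unfolding tendsto_iff
proof (intro allI impI)
  fix e :: real assume "e > 0"
  then obtain k where "inverse (real (Suc k)) < e"
    using reals_Archimedean by blast
  then have "1 / real (Suc k) < e"
    by (simp add: inverse_eq_divide)
  show "eventually (\<lambda>n. dist (f n) l < e) F"
    using assms[of k] by (rule eventually_mono) (use \<open>1 / real (Suc k) < e\<close> in linarith)
qed

lemma AE_tendsto_integral_of_LDP:
  assumes M: "prob_space M"
    and Y: "\<And>n \<omega>. \<omega> \<in> space M \<Longrightarrow> Y n \<omega> \<in> PS T"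
    and LDP: "LDP (weaktop T) (\<lambda>n. distr M (borel_of (weaktop T)) (Y n)) (\<lambda>n. real (Nn n)) H"
    and good: "good_rate_function (weaktop T) H"
    and zero: "\<mu> \<in> PS T" "H \<mu> = 0" and unique: "\<forall>\<nu>\<in>PS T. H \<nu> = 0 \<longrightarrow> \<nu> = \<mu>"
    and \<psi>: "\<psi> \<in> bcont (seqtop T)"
  shows "AE \<omega> in M. (\<lambda>n. \<integral>x. \<psi> x \<partial>Y n \<omega>) \<longlonglongrightarrow> (\<integral>x. \<psi> x \<partial>\<mu>)"
proof -
  define near where "near k = PS T \<inter> {\<nu>. (\<integral>x. \<psi> x \<partial>\<nu>) \<in> ball (\<integral>x. \<psi> x \<partial>\<mu>) (1 / Suc k)}" for k
  have notin: "AE \<omega> in M. eventually (\<lambda>n. Y n \<omega> \<notin> PS T - near k) sequentially" for k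
  proof (rule LDP_AE_eventually_notin[OF M _ LDP good])
    have "openin (weaktop T) (near k)"
      unfolding near_def using \<psi> by (rule openin_weaktop_integral_vimage) simp
    then have "closedin (weaktop T) (topspace (weaktop T) - near k)"
      by (rule closedin_diff[OF closedin_topspace])
    then show "closedin (weaktop T) (PS T - near k)"
      by simp
    show "Y n \<omega> \<in> topspace (weaktop T)" if "\<omega> \<in> space M" for n \<omega>
      using Y[OF that] by simp
    show "\<mu> \<in> topspace (weaktop T)"
      using zero(1) by simp
    show "H \<mu> = 0"
      by (rule zero(2))
    show "\<forall>x\<in>topspace (weaktop T). H x = 0 \<longrightarrow> x = \<mu>"
      using unique by simp
    show "\<mu> \<notin> PS T - near k"
      using zero(1) unfolding near_def by simp
  qed
  have "AE \<omega> in M. eventually (\<lambda>n. Y n \<omega> \<in> near k) sequentially" for k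
    using notin[of k]
  proof (rule AE_mp, intro AE_I2 impI)
    fix \<omega> assume "\<omega> \<in> space M" "eventually (\<lambda>n. Y n \<omega> \<notin> PS T - near k) sequentially"
    then show "eventually (\<lambda>n. Y n \<omega> \<in> near k) sequentially"
      using Y by (simp add: eventually_mono)
  qed
  then have "AE \<omega> in M. \<forall>k. eventually (\<lambda>n. Y n \<omega> \<in> near k) sequentially"
    unfolding AE_all_countable ..
  then show ?thesis
  proof (rule AE_mp, intro AE_I2 impI)
    fix \<omega> assume near: "\<forall>k. eventually (\<lambda>n. Y n \<omega> \<in> near k) sequentially"
    show "(\<lambda>n. \<integral>x. \<psi> x \<partial>Y n \<omega>) \<longlonglongrightarrow> (\<integral>x. \<psi> x \<partial>\<mu>)"
    proof (rule tendsto_of_dist_less_inverse_Suc)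
      show "eventually (\<lambda>n. dist (\<integral>x. \<psi> x \<partial>Y n \<omega>) (\<integral>x. \<psi> x \<partial>\<mu>) < 1 / Suc k) sequentially"
        for k
        using near[rule_format, of k] by (rule eventually_mono) (simp add: near_def dist_commute)
    qed
  qed
qed

lemma LDP_AE_limitin_weaktop:
  assumes M: "prob_space M" and T: "T \<ge> 0"
    and Y: "\<And>n \<omega>. \<omega> \<in> space M \<Longrightarrow> Y n \<omega> \<in> PS T"
    and LDP: "LDP (weaktop T) (\<lambda>n. distr M (borel_of (weaktop T)) (Y n)) (\<lambda>n. real (Nn n)) H"
    and good: "good_rate_function (weaktop T) H"
    and zero: "\<mu> \<in> PS T" "H \<mu> = 0" and unique: "\<forall>\<nu>\<in>PS T. H \<nu> = 0 \<longrightarrow> \<nu> = \<mu>"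
  shows "AE \<omega> in M. limitin (weaktop T) (\<lambda>n. Y n \<omega>) \<mu> sequentially"
proof -
  obtain D where D: "lower_approximating_class (seqtop T) D" "countable D"
    using countable_lower_approximating_class_seqtop[OF T] by blast
  have "AE \<omega> in M. \<forall>\<psi>\<in>D. (\<lambda>n. \<integral>x. \<psi> x \<partial>Y n \<omega>) \<longlonglongrightarrow> (\<integral>x. \<psi> x \<partial>\<mu>)"
  proof (subst AE_ball_countable[OF D(2)], intro ballI)
    fix \<psi> assume "\<psi> \<in> D"
    then have "\<psi> \<in> bcont (seqtop T)"
      using lower_approximating_classD(1)[OF D(1)] by blast
    then show "AE \<omega> in M. (\<lambda>n. \<integral>x. \<psi> x \<partial>Y n \<omega>) \<longlonglongrightarrow> (\<integral>x. \<psi> x \<partial>\<mu>)"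
      using AE_tendsto_integral_of_LDP[OF M Y LDP good zero unique] by blast
  qed
  then show ?thesis
  proof (rule AE_mp, intro AE_I2 impI)
    fix \<omega> assume \<omega>: "\<omega> \<in> space M"
      and conv: "\<forall>\<psi>\<in>D. (\<lambda>n. \<integral>x. \<psi> x \<partial>Y n \<omega>) \<longlonglongrightarrow> (\<integral>x. \<psi> x \<partial>\<mu>)"
    have Y_prob: "prob_space (Y n \<omega>)" and Y_sets: "sets (Y n \<omega>) = sets (borel_of (seqtop T))" for n
      using Y[OF \<omega>] unfolding PS_def by auto
    have \<mu>_prob: "prob_space \<mu>" and \<mu>_sets: "sets \<mu> = sets (borel_of (seqtop T))"
      using zero(1) unfolding PS_def by auto
    show "limitin (weaktop T) (\<lambda>n. Y n \<omega>) \<mu> sequentially"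
    proof (rule limitin_weaktopI[OF zero(1) Y[OF \<omega>]])
      fix \<phi> assume \<phi>: "\<phi> \<in> bcont (seqtop T)"
      show "(\<lambda>n. \<integral>x. \<phi> x \<partial>Y n \<omega>) \<longlonglongrightarrow> (\<integral>x. \<phi> x \<partial>\<mu>)"
        by (rule tendsto_integral_of_lower_approximating_class[OF D Y_prob Y_sets \<mu>_prob \<mu>_sets _ \<phi>])
           (use conv in blast)
    qed
  qed
qed

theorem corollary2p7:
  fixes \<sigma> T :: real
    and f :: "real \<Rightarrow> real"
    and R :: "int \<Rightarrow> int \<Rightarrow> real"
    and a b :: "int \<Rightarrow> real"
    and M :: "'w measure"
    and J :: "nat \<Rightarrow> 'w \<Rightarrow> int \<times> int \<Rightarrow> real"
    and B V :: "nat \<Rightarrow> 'w \<Rightarrow> int \<Rightarrow> real \<Rightarrow> real"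
    and H :: "(int \<Rightarrow> real \<Rightarrow> real) measure \<Rightarrow> ereal"
    and \<mu>star :: "(int \<Rightarrow> real \<Rightarrow> real) measure"
  assumes sigma_pos: "\<sigma> > 0" and T_pos: "T > 0"
    and f_range: "\<forall>x. f x \<in> {0..1}" and f_lip: "1-lipschitz_on UNIV f"
    and R_bound: "\<forall>k l. \<bar>R k l\<bar> \<le> a k * b l"
    and a_pos: "\<forall>k. a k > 0" and b_pos: "\<forall>l. b l > 0"
    and a_decay: "\<forall>e>0. \<exists>K. \<forall>k. \<bar>k\<bar> \<ge> K \<longrightarrow> \<bar>real_of_int k\<bar> ^ 3 * a k < e"
    and b_summable: "b summable_on UNIV"
    and R_field: "gaussian_field_autocorrelation R"
    and R_spectral: "\<forall>\<phi>1\<in>{-pi..<pi}. \<forall>\<phi>2\<in>{-pi..<pi}.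
                        spectral_density R \<phi>1 \<phi>2 \<in> \<real> \<and> Re (spectral_density R \<phi>1 \<phi>2) > 0"
    and M_prob: "prob_space M"
    and J_gauss: "\<forall>n. jointly_gaussian M (\<lambda>ij \<omega>. J n \<omega> ij) (Iset n \<times> Iset n)"
    and J_centered: "\<forall>n. \<forall>i\<in>Iset n. \<forall>j\<in>Iset n. (\<integral>\<omega>. J n \<omega> (i, j) \<partial>M) = 0"
    and J_cov: "\<forall>n. \<forall>i\<in>Iset n. \<forall>j\<in>Iset n. \<forall>k\<in>Iset n. \<forall>l\<in>Iset n.
                  (\<integral>\<omega>. J n \<omega> (i, j) * J n \<omega> (k, l) \<partial>M)
                    = R (modI n (k - i)) (modI n (l - j)) / real (Nn n)"
    and B_bm: "\<forall>n. \<forall>i\<in>Iset n. std_brownian M T (\<lambda>\<omega>. B n \<omega> i)"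
    and JB_indep: "\<forall>n. indep_noise M T (Iset n) (J n) (B n)"
    and V_sol: "\<forall>n. \<forall>\<omega>\<in>space M. \<forall>i\<in>Iset n.
                  continuous_on {0..T} (V n \<omega> i) \<and>
                  (\<forall>t\<in>{0..T}. V n \<omega> i t =
                     integral {0..t} (\<lambda>s. \<Sum>j\<in>Iset n. J n \<omega> (i, j) * f (V n \<omega> j s))
                     + \<sigma> * B n \<omega> i t)"
    and LDP_H: "LDP (weaktop T)
                  (\<lambda>n. distr M (borel_of (weaktop T))
                         (\<lambda>\<omega>. emp_measure T n (\<lambda>j. restrict (V n \<omega> j) {0..T})))
                  (\<lambda>n. real (Nn n)) H"
    and H_good: "good_rate_function (weaktop T) H"
    and mu_star: "\<mu>star \<in> PS T" "H \<mu>star = 0"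
    and H_unique_zero: "\<forall>\<mu>\<in>PS T. H \<mu> = 0 \<longrightarrow> \<mu> = \<mu>star"
  shows "AE \<omega> in M. limitin (weaktop T)
           (\<lambda>n. emp_measure T n (\<lambda>j. restrict (V n \<omega> j) {0..T})) \<mu>star sequentially"
proof -
  have "emp_measure T n (\<lambda>j. restrict (V n \<omega> j) {0..T}) \<in> PS T" if "\<omega> \<in> space M" for n \<omega>
  proof (rule emp_measure_in_PS)
    fix j assume "j \<in> Iset n"
    then have "continuous_on {0..T} (V n \<omega> j)"
      using V_sol that by blast
    then have "continuous_on {0..T} (restrict (V n \<omega> j) {0..T})"
      by (rule continuous_on_eq) auto
    then show "restrict (V n \<omega> j) {0..T} \<in> topspace (pathtop T)"
      unfolding pathtop_def topspace_mtopology_of mspace_pathspace by simp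
  qed
  then show ?thesis
    using T_pos by (intro LDP_AE_limitin_weaktop[OF M_prob _ _ LDP_H H_good mu_star H_unique_zero]) auto
qed

end
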